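(* Let $M\in\mathbb R^{\mathbb N\times\mathbb N}$ be bounded on $\ell_2$ and elliptic (there is $C_{\rm ell}>0$ with $Mx\cdot x\ge C_{\rm ell}\|x\|_{\ell_2}^2$), let $n_1=1<n_2<\cdots$ be a block structure, let $M(i,j)=0$ for $|i-j|>b_0$, and additionally $M\in\mathcal B(d,b_0)$ for a metric $d$ on $\mathbb N$. Let $M=LU$ be the block-$LU$-factorization with $L$ block-lower triangular, $U$ block-upper triangular, $L(i,i)=I$, and let $D$ be block-diagonal with $D(i,i)=U(i,i)$. Then for every $\varepsilon>0$ there exist $b\in\mathbb N$ and a block-upper triangular $U_\varepsilon^{-1}\in\mathcal B(d,b)$ with $U_\varepsilon^{-1}(i,j)=0$ for $|i-j|>b$ such that $\|U^{-1}-U_\varepsilon^{-1}\|_2\le\varepsilon$; $U_\varepsilon^{-1}$ is invertible with bounded inverse and $\sup_{\varepsilon>0}(\|U_\varepsilon\|_2+\|U_\varepsilon^{-1}\|_2)<\infty$. Moreover, there exists a block-diagonal $D_\varepsilon\in\mathcal B(d,b)$ which is bounded and elliptic with $\|D-D_\varepsilon\|_2\le\varepsilon$.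
   Context: $\|\cdot\|_2$ is the operator norm on $\ell_2$. $M\in\mathcal B(d,b)$ iff $M_{ij}=0$ whenever $d(i,j)>b$. Block notation: $M(i,j)=M|_{\{n_i,\dots,n_{i+1}-1\}\times\{n_j,\dots,n_{j+1}-1\}}$; block-upper triangular means $M(i,j)=0$ for $i>j$. *)

theory Defs
  imports "HOL-Analysis.Analysis"
begin

text \<open>Infinite real matrices indexed by the natural numbers (0-based), acting on ell_2.\<close>

type_synonym imat = "nat \<Rightarrow> nat \<Rightarrow> real"
type_synonym ivec = "nat \<Rightarrow> real"

definition l2 :: "ivec \<Rightarrow> bool" where
  "l2 x \<longleftrightarrow> summable (\<lambda>i. (x i)\<^sup>2)"

definition l2norm :: "ivec \<Rightarrow> real" where
  "l2norm x = sqrt (\<Sum>i. (x i)\<^sup>2)"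

definition l2inner :: "ivec \<Rightarrow> ivec \<Rightarrow> real" where
  "l2inner x y = (\<Sum>i. x i * y i)"

definition mv :: "imat \<Rightarrow> ivec \<Rightarrow> ivec" where
  "mv M x = (\<lambda>i. \<Sum>j. M i j * x j)"

definition mmul :: "imat \<Rightarrow> imat \<Rightarrow> imat" where
  "mmul A B = (\<lambda>i j. \<Sum>k. A i k * B k j)"

definition mdiff :: "imat \<Rightarrow> imat \<Rightarrow> imat" where
  "mdiff A B = (\<lambda>i j. A i j - B i j)"

definition bounded_l2 :: "imat \<Rightarrow> bool" where
  "bounded_l2 M \<longleftrightarrow>
     (\<forall>x. l2 x \<longrightarrow> (\<forall>i. summable (\<lambda>j. M i j * x j)) \<and> l2 (mv M x)) \<and>
     (\<exists>C. \<forall>x. l2 x \<longrightarrow> l2norm (mv M x) \<le> C * l2norm x)"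

definition opnorm2 :: "imat \<Rightarrow> real" where
  "opnorm2 M = Inf {C. 0 \<le> C \<and> (\<forall>x. l2 x \<longrightarrow> l2norm (mv M x) \<le> C * l2norm x)}"

definition elliptic :: "imat \<Rightarrow> bool" where
  "elliptic M \<longleftrightarrow> (\<exists>C>0. \<forall>x. l2 x \<longrightarrow> l2inner (mv M x) x \<ge> C * (l2norm x)\<^sup>2)"

definition is_bounded_inverse :: "imat \<Rightarrow> imat \<Rightarrow> bool" where
  "is_bounded_inverse A B \<longleftrightarrow> bounded_l2 A \<and> bounded_l2 B \<and>
     (\<forall>x. l2 x \<longrightarrow> mv A (mv B x) = x \<and> mv B (mv A x) = x)"

definition nat_metric :: "(nat \<Rightarrow> nat \<Rightarrow> real) \<Rightarrow> bool" where
  "nat_metric d \<longleftrightarrow> (\<forall>i j. d i j = 0 \<longleftrightarrow> i = j) \<and> (\<forall>i j. d i j = d j i) \<and>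
     (\<forall>i j k. d i k \<le> d i j + d j k)"

definition in_B :: "(nat \<Rightarrow> nat \<Rightarrow> real) \<Rightarrow> nat \<Rightarrow> imat \<Rightarrow> bool" where
  "in_B d b M \<longleftrightarrow> (\<forall>i j. d i j > real b \<longrightarrow> M i j = 0)"

definition block_structure :: "(nat \<Rightarrow> nat) \<Rightarrow> bool" where
  "block_structure n \<longleftrightarrow> n 0 = 0 \<and> strict_mono n"

definition blk :: "(nat \<Rightarrow> nat) \<Rightarrow> nat \<Rightarrow> nat set" where
  "blk n i = {n i ..< n (Suc i)}"

definition blk_zero :: "(nat \<Rightarrow> nat) \<Rightarrow> imat \<Rightarrow> nat \<Rightarrow> nat \<Rightarrow> bool" where
  "blk_zero n M i j \<longleftrightarrow> (\<forall>k\<in>blk n i. \<forall>l\<in>blk n j. M k l = 0)"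

definition blk_banded :: "(nat \<Rightarrow> nat) \<Rightarrow> nat \<Rightarrow> imat \<Rightarrow> bool" where
  "blk_banded n b M \<longleftrightarrow> (\<forall>i j. \<bar>int i - int j\<bar> > int b \<longrightarrow> blk_zero n M i j)"

definition blk_upper :: "(nat \<Rightarrow> nat) \<Rightarrow> imat \<Rightarrow> bool" where
  "blk_upper n M \<longleftrightarrow> (\<forall>i j. i > j \<longrightarrow> blk_zero n M i j)"

definition blk_lower :: "(nat \<Rightarrow> nat) \<Rightarrow> imat \<Rightarrow> bool" where
  "blk_lower n M \<longleftrightarrow> (\<forall>i j. i < j \<longrightarrow> blk_zero n M i j)"

definition blk_diagonal :: "(nat \<Rightarrow> nat) \<Rightarrow> imat \<Rightarrow> bool" where
  "blk_diagonal n M \<longleftrightarrow> (\<forall>i j. i \<noteq> j \<longrightarrow> blk_zero n M i j)"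

definition blk_unit_diag :: "(nat \<Rightarrow> nat) \<Rightarrow> imat \<Rightarrow> bool" where
  "blk_unit_diag n M \<longleftrightarrow> (\<forall>i. \<forall>k\<in>blk n i. \<forall>l\<in>blk n i. M k l = (if k = l then 1 else 0))"

definition blk_diag_part :: "(nat \<Rightarrow> nat) \<Rightarrow> imat \<Rightarrow> imat" where
  "blk_diag_part n U = (\<lambda>k l. if (\<exists>i. k \<in> blk n i \<and> l \<in> blk n i) then U k l else 0)"

end

theory Submission
  imports Defs "Jordan_Normal_Form.Determinant"
begin

text \<open>Write A_N for the leading N x N section of M. By ellipticity the Richardson iteration
  I - \<omega> A_N is a contraction with a factor q < 1 independent of N, and each of its steps spreads
  supports by at most the bandwidth b0, both in the metric d and in the block index. Since
  M U^-1 = L is block-lower triangular with identity diagonal blocks, the columns of U^-1 that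
  belong to block J solve A_N v = e_l with N = n (J + 1). Replacing A_N^-1 by k terms of its
  Neumann series gives a block-upper triangular banded approximation of U^-1. Its error on
  block I coincides with the residual after m Richardson steps for every m up to about
  (J - I) / b0, so it decays geometrically in k and in the block distance, and a Schur test
  bounds it in norm. Once it is small compared to 1 / norm U, the approximation is invertible
  with an inverse of norm at most 2 norm U. The diagonal block D(J,J) is the Schur complement
  y \<mapsto> (M x)|_J with x = y - U^-1 ((U y)|_{<J}); computing the inner inverse by the same
  Neumann series gives the block-diagonal approximation, which inherits the ellipticity
  constant of M up to its error.\<close>

definition supp_lt :: "nat \<Rightarrow> ivec \<Rightarrow> bool" where
  "supp_lt N x \<longleftrightarrow> (\<forall>i\<ge>N. x i = 0)"

definition trunc :: "nat \<Rightarrow> ivec \<Rightarrow> ivec" where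
  "trunc N x = (\<lambda>i. if i < N then x i else 0)"

lemma supp_lt_trunc[simp]: "supp_lt N (trunc N x)"
  by (simp add: supp_lt_def trunc_def)

lemma supp_lt_mono: "supp_lt N x \<Longrightarrow> N \<le> N' \<Longrightarrow> supp_lt N' x"
  by (auto simp: supp_lt_def)

lemma supp_lt_diff: "supp_lt N a \<Longrightarrow> supp_lt N b \<Longrightarrow> supp_lt N (\<lambda>i. a i - b i)"
  by (simp add: supp_lt_def)

lemma suminf_supp_lt:
  fixes f :: "nat \<Rightarrow> real"
  assumes "\<And>i. i \<ge> N \<Longrightarrow> f i = 0"
  shows "suminf f = (\<Sum>i<N. f i)" "summable f"
proof -
  show "suminf f = (\<Sum>i<N. f i)"
    using suminf_finite[of "{..<N}" f] assms by auto
  show "summable f"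
    by (rule summable_finite[of "{..<N}"]) (use assms in auto)
qed

lemma mv_supp_lt: "supp_lt N x \<Longrightarrow> mv T x i = (\<Sum>j<N. T i j * x j)"
  unfolding mv_def by (rule suminf_supp_lt) (auto simp: supp_lt_def)

lemma summable_row_supp_lt: "supp_lt N x \<Longrightarrow> summable (\<lambda>j. T i j * x j)"
  by (rule suminf_supp_lt[of N]) (auto simp: supp_lt_def)

lemma l2_supp_lt: "supp_lt N x \<Longrightarrow> l2 x"
  unfolding l2_def by (rule suminf_supp_lt[of N]) (auto simp: supp_lt_def)

lemma l2norm_supp_lt: "supp_lt N x \<Longrightarrow> l2norm x = L2_set x {..<N}"
  unfolding l2norm_def L2_set_def by (subst suminf_supp_lt[of N]) (auto simp: supp_lt_def)

lemma l2inner_supp_lt: "supp_lt N x \<Longrightarrow> l2inner y x = (\<Sum>i<N. y i * x i)"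
  unfolding l2inner_def by (rule suminf_supp_lt) (auto simp: supp_lt_def)

lemma l2norm_nonneg: "l2 x \<Longrightarrow> 0 \<le> l2norm x"
  unfolding l2norm_def l2_def by (simp add: suminf_nonneg)

lemma l2norm_power2: "l2 x \<Longrightarrow> (l2norm x)\<^sup>2 = (\<Sum>i. (x i)\<^sup>2)"
  unfolding l2norm_def l2_def by (simp add: suminf_nonneg)

lemma L2_set_le_l2norm: "l2 x \<Longrightarrow> L2_set x {..<N} \<le> l2norm x"
  unfolding l2norm_def l2_def L2_set_def
  by (rule real_sqrt_le_mono, rule sum_le_suminf) auto

lemma l2norm_trunc_le: "l2 x \<Longrightarrow> l2norm (trunc N x) \<le> l2norm x"
proof -
  assume "l2 x"
  have "l2norm (trunc N x) = L2_set (trunc N x) {..<N}" by (simp add: l2norm_supp_lt)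
  also have "\<dots> = L2_set x {..<N}" by (rule L2_set_cong) (auto simp: trunc_def)
  also have "\<dots> \<le> l2norm x" using \<open>l2 x\<close> by (rule L2_set_le_l2norm)
  finally show ?thesis .
qed

lemma l2norm_eq_0_imp_zero: "l2 x \<Longrightarrow> l2norm x = 0 \<Longrightarrow> x i = 0"
  unfolding l2norm_def l2_def
  using suminf_eq_zero_iff[of "\<lambda>i. (x i)\<^sup>2"] by (simp add: suminf_nonneg)

lemma l2_diff: "l2 x \<Longrightarrow> l2 y \<Longrightarrow> l2 (\<lambda>i. x i - y i)"
proof -
  assume "l2 x" "l2 y"
  hence s: "summable (\<lambda>i. 2 * (x i)\<^sup>2 + 2 * (y i)\<^sup>2)" unfolding l2_def
    by (intro summable_add summable_mult)
  have "norm ((x i - y i)\<^sup>2) \<le> 2 * (x i)\<^sup>2 + 2 * (y i)\<^sup>2" for i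
  proof -
    have "0 \<le> (x i + y i)\<^sup>2" by simp
    hence "(x i - y i)\<^sup>2 \<le> 2 * (x i)\<^sup>2 + 2 * (y i)\<^sup>2"
      by (simp add: power2_eq_square algebra_simps)
    moreover have "norm ((x i - y i)\<^sup>2) = (x i - y i)\<^sup>2" by simp
    ultimately show ?thesis by simp
  qed
  thus ?thesis unfolding l2_def by (rule summable_comparison_test'[OF s])
qed

lemma summable_l2_mult: "l2 x \<Longrightarrow> l2 y \<Longrightarrow> summable (\<lambda>i. x i * y i)"
proof -
  assume "l2 x" "l2 y"
  hence "summable (\<lambda>i. ((x i)\<^sup>2 + (y i)\<^sup>2) / 2)" unfolding l2_def
    by (intro summable_divide summable_add)
  moreover have "norm (x i * y i) \<le> ((x i)\<^sup>2 + (y i)\<^sup>2) / 2" for i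
    using sum_squares_bound[of "\<bar>x i\<bar>" "\<bar>y i\<bar>"]
    by (simp add: abs_mult power2_eq_square)
  ultimately show ?thesis by (rule summable_comparison_test'[where N=0])
qed

lemma L2_set_mono_set: "finite B \<Longrightarrow> A \<subseteq> B \<Longrightarrow> L2_set f A \<le> L2_set f B"
  unfolding L2_set_def by (auto intro!: real_sqrt_le_mono sum_mono2)

lemma L2_set_sum_le: "finite S \<Longrightarrow> L2_set (\<lambda>i. \<Sum>l\<in>S. g l i) A \<le> (\<Sum>l\<in>S. L2_set (g l) A)"
proof (induction S rule: finite_induct)
  case empty
  then show ?case by (simp add: L2_set_0')
next
  case (insert a S)
  have "L2_set (\<lambda>i. \<Sum>l\<in>insert a S. g l i) A = L2_set (\<lambda>i. g a i + (\<Sum>l\<in>S. g l i)) A"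
    using insert by simp
  also have "\<dots> \<le> L2_set (g a) A + L2_set (\<lambda>i. \<Sum>l\<in>S. g l i) A"
    by (rule L2_set_triangle_ineq)
  finally show ?case using insert by simp
qed

lemma L2_set_diff_le: "L2_set (\<lambda>i. f i - g i) A \<le> L2_set f A + L2_set g A"
proof -
  have "L2_set (\<lambda>i. f i - g i) A = L2_set (\<lambda>i. f i + (- g i)) A" by simp
  also have "\<dots> \<le> L2_set f A + L2_set (\<lambda>i. - g i) A" by (rule L2_set_triangle_ineq)
  also have "L2_set (\<lambda>i. - g i) A = L2_set g A" by (simp add: L2_set_def)
  finally show ?thesis .
qed

lemma L2_set_power2: "(L2_set f A)\<^sup>2 = (\<Sum>i\<in>A. (f i)\<^sup>2)"
  unfolding L2_set_def by (simp add: sum_nonneg)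

lemma abs_le_L2_set: "finite A \<Longrightarrow> i \<in> A \<Longrightarrow> \<bar>f i\<bar> \<le> L2_set f A"
  using member_le_L2_set[of A i "\<lambda>i. \<bar>f i\<bar>"] by (simp add: L2_set_def)

lemma l2norm_diff_le_supp_lt:
  "supp_lt N a \<Longrightarrow> supp_lt N b \<Longrightarrow> l2norm (\<lambda>i. a i - b i) \<le> l2norm a + l2norm b"
proof -
  assume a: "supp_lt N a" and b: "supp_lt N b"
  have "l2norm (\<lambda>i. a i - b i) = L2_set (\<lambda>i. a i - b i) {..<N}"
    by (rule l2norm_supp_lt[OF supp_lt_diff[OF a b]])
  also have "\<dots> \<le> L2_set a {..<N} + L2_set b {..<N}" by (rule L2_set_diff_le)
  finally show ?thesis using l2norm_supp_lt[OF a] l2norm_supp_lt[OF b] by simp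
qed

lemma l2norm_le_add_diff_supp_lt:
  assumes "supp_lt N a" "supp_lt N b"
  shows "l2norm a \<le> l2norm b + l2norm (\<lambda>i. a i - b i)"
proof -
  have "L2_set a {..<N} = L2_set (\<lambda>i. b i + (a i - b i)) {..<N}" by simp
  also have "\<dots> \<le> L2_set b {..<N} + L2_set (\<lambda>i. a i - b i) {..<N}"
    by (rule L2_set_triangle_ineq)
  finally show ?thesis
    using assms supp_lt_diff[OF assms] by (simp add: l2norm_supp_lt)
qed

lemma abs_le_l2norm: "supp_lt N v \<Longrightarrow> \<bar>v i\<bar> \<le> l2norm v"
proof -
  assume v: "supp_lt N v"
  let ?N = "max N (Suc i)"
  have "supp_lt ?N v" using v by (rule supp_lt_mono) simp
  hence "l2norm v = L2_set v {..<?N}" by (rule l2norm_supp_lt)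
  moreover have "\<bar>v i\<bar> \<le> L2_set v {..<?N}" by (rule abs_le_L2_set) auto
  ultimately show ?thesis by simp
qed

lemma bounded_l2I:
  assumes "\<And>x. l2 x \<Longrightarrow> l2 (mv T x) \<and> l2norm (mv T x) \<le> C * l2norm x"
    and "\<And>x i. l2 x \<Longrightarrow> summable (\<lambda>j. T i j * x j)"
  shows "bounded_l2 T"
proof -
  have "\<forall>x. l2 x \<longrightarrow> (\<forall>i. summable (\<lambda>j. T i j * x j)) \<and> l2 (mv T x)" using assms by blast
  moreover have "\<forall>x. l2 x \<longrightarrow> l2norm (mv T x) \<le> C * l2norm x" using assms
    by blast
  ultimately show ?thesis unfolding bounded_l2_def by blast
qed

lemma bounded_l2_nonneg_bound:
  assumes "bounded_l2 M"
  obtains C where "0 \<le> C" "\<And>x. l2 x \<Longrightarrow> l2norm (mv M x) \<le> C * l2norm x"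
proof -
  from assms obtain C where C: "\<forall>x. l2 x \<longrightarrow> l2norm (mv M x) \<le> C * l2norm x"
    unfolding bounded_l2_def by blast
  have "l2norm (mv M x) \<le> max C 0 * l2norm x" if x: "l2 x" for x
  proof -
    have "l2norm (mv M x) \<le> C * l2norm x" using C x by blast
    also have "\<dots> \<le> max C 0 * l2norm x"
      by (rule mult_right_mono) (simp_all add: l2norm_nonneg[OF x])
    finally show ?thesis .
  qed
  then show ?thesis by (intro that[of "max C 0"]) simp_all
qed

lemma opnorm2_nonneg:
  assumes "bounded_l2 M"
  shows "0 \<le> opnorm2 M"
proof -
  obtain C where "0 \<le> C" "\<And>x. l2 x \<Longrightarrow> l2norm (mv M x) \<le> C * l2norm x"
    using bounded_l2_nonneg_bound[OF assms] by blast
  then have "{C. 0 \<le> C \<and> (\<forall>x. l2 x \<longrightarrow> l2norm (mv M x) \<le> C * l2norm x)} \<noteq> {}" by blast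
  then show ?thesis unfolding opnorm2_def by (rule cInf_greatest) blast
qed

lemma opnorm2_le:
  assumes "0 \<le> C" "\<And>x. l2 x \<Longrightarrow> l2norm (mv M x) \<le> C * l2norm x"
  shows "opnorm2 M \<le> C"
  unfolding opnorm2_def
  by (rule cInf_lower) (use assms in \<open>auto intro!: bdd_belowI[where m=0]\<close>)

lemma opnorm2_bound:
  assumes M: "bounded_l2 M" and x: "l2 x"
  shows "l2norm (mv M x) \<le> opnorm2 M * l2norm x"
proof -
  obtain C where C: "0 \<le> C" "\<And>x. l2 x \<Longrightarrow> l2norm (mv M x) \<le> C * l2norm x"
    using bounded_l2_nonneg_bound[OF M] by blast
  show ?thesis
  proof (cases "l2norm x = 0")
    case True
    then show ?thesis using C(2)[OF x] by simp
  next
    case False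
    then have pos: "0 < l2norm x" using l2norm_nonneg[OF x] by simp
    have "{C. 0 \<le> C \<and> (\<forall>x. l2 x \<longrightarrow> l2norm (mv M x) \<le> C * l2norm x)} \<noteq> {}" using C by blast
    then have "l2norm (mv M x) / l2norm x \<le> opnorm2 M"
      unfolding opnorm2_def
        by (rule cInf_greatest) (use x pos in \<open>auto simp: divide_le_eq\<close>)
    then show ?thesis using pos by (simp add: divide_le_eq mult.commute)
  qed
qed

lemma bounded_l2_summable: "bounded_l2 M \<Longrightarrow> l2 x \<Longrightarrow> summable (\<lambda>j. M i j * x j)"
  unfolding bounded_l2_def by blast

lemma bounded_l2_l2: "bounded_l2 M \<Longrightarrow> l2 x \<Longrightarrow> l2 (mv M x)"
  unfolding bounded_l2_def by blast

lemma l2_bound_from_trunc: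
  assumes x: "l2 x" and rows: "\<And>i. summable (\<lambda>j. T i j * x j)"
    and B: "\<And>N. l2 (mv T (trunc N x)) \<and> l2norm (mv T (trunc N x)) \<le> B"
  shows "l2 (mv T x) \<and> l2norm (mv T x) \<le> B"
proof -
  have B0: "0 \<le> B" using B[of 0] l2norm_nonneg by (meson order_trans)
  have part: "(\<Sum>i<P. (mv T (trunc N x) i)\<^sup>2) \<le> B\<^sup>2" for N P
  proof -
    have "(\<Sum>i<P. (mv T (trunc N x) i)\<^sup>2) \<le> (\<Sum>i. (mv T (trunc N x) i)\<^sup>2)"
      using B[of N] unfolding l2_def by (intro sum_le_suminf) auto
    also have "\<dots> = (l2norm (mv T (trunc N x)))\<^sup>2" using B[of N]
      by (simp add: l2norm_power2)
    also have "\<dots> \<le> B\<^sup>2" using B[of N] l2norm_nonneg by (intro power_mono) auto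
    finally show ?thesis .
  qed
  have conv: "(\<lambda>N. mv T (trunc N x) i) \<longlonglongrightarrow> mv T x i" for i
  proof -
    have "mv T (trunc N x) i = (\<Sum>j<N. T i j * x j)" for N
      by (subst mv_supp_lt[of N]) (auto simp: trunc_def supp_lt_def)
    thus ?thesis unfolding mv_def using summable_LIMSEQ[OF rows[of i]] by simp
  qed
  have part2: "(\<Sum>i<P. (mv T x i)\<^sup>2) \<le> B\<^sup>2" for P
  proof (rule LIMSEQ_le_const2)
    show "(\<lambda>N. \<Sum>i<P. (mv T (trunc N x) i)\<^sup>2) \<longlonglongrightarrow> (\<Sum>i<P. (mv T x i)\<^sup>2)"
      by (intro tendsto_sum tendsto_power conv)
    show "\<exists>N0. \<forall>N\<ge>N0. (\<Sum>i<P. (mv T (trunc N x) i)\<^sup>2) \<le> B\<^sup>2"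
      using part by auto
  qed
  have sm: "summable (\<lambda>i. (mv T x i)\<^sup>2)"
    by (rule summableI_nonneg_bounded[OF _ part2]) auto
  have "(\<Sum>i. (mv T x i)\<^sup>2) \<le> B\<^sup>2" by (rule suminf_le_const[OF sm part2])
  hence "l2norm (mv T x) \<le> sqrt (B\<^sup>2)" unfolding l2norm_def by (rule real_sqrt_le_mono)
  thus ?thesis using sm B0 by (simp add: l2_def)
qed

lemma mat_vec_solvable_if_kernel_trivial:
  fixes A :: "real mat"
  assumes A: "A \<in> carrier_mat N N"
    and ker: "\<And>v. v \<in> carrier_vec N \<Longrightarrow> A *\<^sub>v v = 0\<^sub>v N \<Longrightarrow> v = 0\<^sub>v N"
  obtains w where "w \<in> carrier_vec N" "A *\<^sub>v w = vec N y"
proof -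
  have "Determinant.det A \<noteq> 0" using det_0_iff_vec_prod_zero_field[OF A] ker by blast
  from det_non_zero_imp_unit[OF A this, of "()"]
  obtain B where B: "B \<in> carrier_mat N N" "A * B = 1\<^sub>m N"
    unfolding Units_def ring_mat_def by auto
  have "A *\<^sub>v (B *\<^sub>v vec N y) = vec N y"
    using A B by (simp add: assoc_mult_mat_vec[symmetric, of _ N N _ N])
  then show ?thesis using B by (intro that[of "B *\<^sub>v vec N y"]) simp_all
qed

lemma finite_system_solvable:
  fixes T :: imat
  assumes inj: "\<And>x. supp_lt N x \<Longrightarrow> (\<forall>i<N. (\<Sum>j<N. T i j * x j) = 0) \<Longrightarrow> (\<forall>i<N. x i = 0)"
  shows "\<exists>x. supp_lt N x \<and> (\<forall>i<N. (\<Sum>j<N. T i j * x j) = y i)"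
proof -
  define A where "A = Matrix.mat N N (\<lambda>(i,j). T i j)"
  define ext where "ext v = (\<lambda>i. if i < N then v $ i else 0)" for v :: "real vec"
  have A: "A \<in> carrier_mat N N" by (simp add: A_def)
  have Av: "(A *\<^sub>v v) $ i = (\<Sum>j<N. T i j * ext v j)" if "i < N" "v \<in> carrier_vec N" for v i
    using that by (simp add: A_def ext_def scalar_prod_def lessThan_atLeast0 mult.commute)
  have "v = 0\<^sub>v N" if v: "v \<in> carrier_vec N" "A *\<^sub>v v = 0\<^sub>v N" for v
  proof -
    have "\<forall>i<N. (\<Sum>j<N. T i j * ext v j) = 0" using Av v by (metis index_zero_vec(1))
    moreover have "supp_lt N (ext v)" by (simp add: supp_lt_def ext_def)
    ultimately have "\<forall>i<N. ext v i = 0" using inj by blast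
    then show ?thesis using v(1) by (auto simp: ext_def)
  qed
  then obtain w where w: "w \<in> carrier_vec N" "A *\<^sub>v w = vec N y"
    using mat_vec_solvable_if_kernel_trivial[OF A] by blast
  then have "\<forall>i<N. (\<Sum>j<N. T i j * ext w j) = y i" using Av by (metis index_vec)
  moreover have "supp_lt N (ext w)" by (simp add: supp_lt_def ext_def)
  ultimately show ?thesis by blast
qed

definition seq_linear :: "(ivec \<Rightarrow> ivec) \<Rightarrow> bool" where
  "seq_linear f \<longleftrightarrow>
    (\<forall>x y. f (\<lambda>i. x i + y i) = (\<lambda>i. f x i + f y i)) \<and> (\<forall>a x. f (\<lambda>i. a * x i) = (\<lambda>i. a * f x i))"

lemma seq_linear_add: "seq_linear f \<Longrightarrow> f (\<lambda>i. x i + y i) = (\<lambda>i. f x i + f y i)"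
  by (simp add: seq_linear_def)

lemma seq_linear_scale: "seq_linear f \<Longrightarrow> f (\<lambda>i. a * x i) = (\<lambda>i. a * f x i)"
  by (simp add: seq_linear_def)

lemma seq_linear_zero: "seq_linear f \<Longrightarrow> f (\<lambda>i. 0) = (\<lambda>i. 0)"
  using seq_linear_scale[of f 0 "\<lambda>i. 0"] by simp

lemma seq_linear_neg: "seq_linear f \<Longrightarrow> f (\<lambda>i. - x i) = (\<lambda>i. - f x i)"
  using seq_linear_scale[of f "-1" x] by simp

lemma seq_linear_diff: "seq_linear f \<Longrightarrow> f (\<lambda>i. x i - y i) = (\<lambda>i. f x i - f y i)"
  using seq_linear_add[of f x "\<lambda>i. - y i"] seq_linear_neg[of f y] by simp

lemma seq_linear_sum:
  assumes lf: "seq_linear f" and fin: "finite S"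
  shows "f (\<lambda>i. \<Sum>l\<in>S. g l i) = (\<lambda>i. \<Sum>l\<in>S. f (g l) i)"
  using fin
proof (induction S rule: finite_induct)
  case empty
  then show ?case by (simp add: seq_linear_zero[OF lf])
next
  case (insert a S)
  have "f (\<lambda>i. \<Sum>l\<in>insert a S. g l i) = f (\<lambda>i. g a i + (\<Sum>l\<in>S. g l i))"
    using insert by simp
  also have "\<dots> = (\<lambda>i. f (g a) i + f (\<lambda>i. \<Sum>l\<in>S. g l i) i)"
    using insert by (simp add: seq_linear_add[OF lf])
  finally show ?case using insert by simp
qed

lemma seq_linear_comp: "seq_linear f \<Longrightarrow> seq_linear g \<Longrightarrow> seq_linear (\<lambda>x. f (g x))"
  by (simp add: seq_linear_def)

lemma seq_linear_funpow: "seq_linear f \<Longrightarrow> seq_linear (f ^^ m)"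
proof (induction m)
  case 0
  then show ?case by (simp add: seq_linear_def)
next
  case (Suc m)
  then show ?case using seq_linear_comp[of f "f ^^ m"] by (simp add: comp_def)
qed

lemma mv_sum:
  assumes "finite S" "\<And>l. l \<in> S \<Longrightarrow> supp_lt N (g l)"
  shows "mv T (\<lambda>i. \<Sum>l\<in>S. g l i) = (\<lambda>i. \<Sum>l\<in>S. mv T (g l) i)"
proof -
  have fsS: "supp_lt N (\<lambda>i. \<Sum>l\<in>S. g l i)" using assms by (auto simp: supp_lt_def)
  show ?thesis
  proof (rule ext)
    fix i
    have "mv T (\<lambda>i. \<Sum>l\<in>S. g l i) i = (\<Sum>j<N. T i j * (\<Sum>l\<in>S. g l j))"
      by (rule mv_supp_lt[OF fsS])
    also have "\<dots> = (\<Sum>j<N. \<Sum>l\<in>S. T i j * g l j)" by (simp add: sum_distrib_left)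
    also have "\<dots> = (\<Sum>l\<in>S. \<Sum>j<N. T i j * g l j)" by (rule sum.swap)
    also have "\<dots> = (\<Sum>l\<in>S. mv T (g l) i)" using assms by (simp add: mv_supp_lt[of N])
    finally show "mv T (\<lambda>i. \<Sum>l\<in>S. g l i) i = (\<Sum>l\<in>S. mv T (g l) i)" .
  qed
qed

lemma mv_add_supp_lt:
  "supp_lt N x \<Longrightarrow> supp_lt N y \<Longrightarrow> mv T (\<lambda>i. x i + y i) = (\<lambda>i. mv T x i + mv T y i)"
proof -
  assume "supp_lt N x" "supp_lt N y"
  moreover have "supp_lt N (\<lambda>i. x i + y i)" using calculation by (auto simp: supp_lt_def)
  ultimately show ?thesis by (auto simp: mv_supp_lt[of N] fun_eq_iff sum.distrib algebra_simps)
qed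

lemma mv_scale_supp_lt: "supp_lt N x \<Longrightarrow> mv T (\<lambda>i. a * x i) = (\<lambda>i. a * mv T x i)"
proof -
  assume "supp_lt N x"
  moreover have "supp_lt N (\<lambda>i. a * x i)" using calculation by (auto simp: supp_lt_def)
  ultimately show ?thesis by (auto simp: mv_supp_lt[of N] fun_eq_iff sum_distrib_left algebra_simps)
qed

lemma mv_diff_supp_lt:
  "supp_lt N x \<Longrightarrow> supp_lt N y \<Longrightarrow> mv T (\<lambda>i. x i - y i) = (\<lambda>i. mv T x i - mv T y i)"
proof -
  assume a: "supp_lt N x" "supp_lt N y"
  have "supp_lt N (\<lambda>i. - y i)" using a by (auto simp: supp_lt_def)
  moreover have "mv T (\<lambda>i. - y i) = (\<lambda>i. - mv T y i)"
    using mv_scale_supp_lt[OF a(2), of T "-1"] by simp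
  ultimately show ?thesis using mv_add_supp_lt[OF a(1), of "\<lambda>i. - y i" T] by simp
qed

lemma mv_zero[simp]: "mv T (\<lambda>i. 0) = (\<lambda>i. 0)"
  by (simp add: mv_def)

lemma mv_diff:
  assumes "\<And>i. summable (\<lambda>j. T i j * x j)" "\<And>i. summable (\<lambda>j. T i j * y j)"
  shows "mv T (\<lambda>i. x i - y i) = (\<lambda>i. mv T x i - mv T y i)"
proof (rule ext)
  fix i show "mv T (\<lambda>i. x i - y i) i = mv T x i - mv T y i"
    unfolding mv_def using suminf_diff[OF assms(1)[of i] assms(2)[of i]]
      by (simp add: algebra_simps)
qed

lemma mv_mdiff:
  assumes "\<And>i. summable (\<lambda>j. A i j * x j)" "\<And>i. summable (\<lambda>j. B i j * x j)"
  shows "mv (mdiff A B) x = (\<lambda>i. mv A x i - mv B x i)"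
proof (rule ext)
  fix i show "mv (mdiff A B) x i = mv A x i - mv B x i"
    unfolding mv_def mdiff_def using suminf_diff[OF assms(1)[of i] assms(2)[of i]]
      by (simp add: algebra_simps)
qed

definition unit_vec :: "nat \<Rightarrow> ivec" where "unit_vec l = (\<lambda>i. if i = l then 1 else 0)"

lemma supp_lt_unit_vec: "l < N \<Longrightarrow> supp_lt N (unit_vec l)"
  by (simp add: supp_lt_def unit_vec_def)

lemma sum_unit_vec: "supp_lt N y \<Longrightarrow> y = (\<lambda>i. \<Sum>l<N. y l * unit_vec l i)"
proof (rule ext)
  fix i assume y: "supp_lt N y"
  have "(\<Sum>l<N. y l * unit_vec l i) = (\<Sum>l<N. if l = i then y i else 0)"
    by (rule sum.cong) (auto simp: unit_vec_def)
  also have "\<dots> = (if i < N then y i else 0)" by simp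
  also have "\<dots> = y i" using y unfolding supp_lt_def by (cases "i < N") auto
  finally show "y i = (\<Sum>l<N. y l * unit_vec l i)" by simp
qed

lemma mv_sum_unit_vec: "supp_lt N y \<Longrightarrow> mv T y = (\<lambda>i. \<Sum>l<N. y l * mv T (unit_vec l) i)"
proof -
  assume y: "supp_lt N y"
  have "mv T (\<lambda>i. \<Sum>l\<in>{..<N}. y l * unit_vec l i) = (\<lambda>i. \<Sum>l\<in>{..<N}. mv T (\<lambda>i. y l * unit_vec l i) i)"
    by (rule mv_sum[where N=N]) (auto simp: supp_lt_def unit_vec_def)
  also have "\<dots> = (\<lambda>i. \<Sum>l<N. y l * mv T (unit_vec l) i)"
    using mv_scale_supp_lt[OF supp_lt_unit_vec] by simp
  finally have fin: "mv T (\<lambda>i. \<Sum>l\<in>{..<N}. y l * unit_vec l i) = (\<lambda>i. \<Sum>l<N. y l * mv T (unit_vec l) i)" .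
  have e: "(\<lambda>i. \<Sum>l\<in>{..<N}. y l * unit_vec l i) = y"
    by (rule sym, rule sum_unit_vec[OF y])
  show ?thesis using fin unfolding e .
qed

lemma seq_linear_sum_unit_vec:
  assumes f: "seq_linear f" and y: "supp_lt N y"
  shows "f y = (\<lambda>i. \<Sum>l<N. y l * f (unit_vec l) i)"
proof -
  have "f y = f (\<lambda>i. \<Sum>l\<in>{..<N}. y l * unit_vec l i)"
    using arg_cong[OF sum_unit_vec[OF y], of f] .
  also have "\<dots> = (\<lambda>i. \<Sum>l<N. f (\<lambda>i. y l * unit_vec l i) i)" by (rule seq_linear_sum[OF f]) simp
  also have "\<dots> = (\<lambda>i. \<Sum>l<N. y l * f (unit_vec l) i)" using seq_linear_scale[OF f] by simp
  finally show ?thesis .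
qed

lemma mv_unit_vec: "mv T (unit_vec l) j = T j l"
proof -
  have "supp_lt (Suc l) (unit_vec l)" by (simp add: supp_lt_def unit_vec_def)
  hence "mv T (unit_vec l) j = (\<Sum>i<Suc l. T j i * unit_vec l i)" by (rule mv_supp_lt)
  also have "\<dots> = T j l" by (simp add: unit_vec_def)
  finally show ?thesis .
qed

definition blk_index :: "(nat \<Rightarrow> nat) \<Rightarrow> nat \<Rightarrow> nat" where
  "blk_index n i = (THE J. i \<in> blk n J)"

lemma blk_ex:
  assumes "block_structure n"
  shows "\<exists>J. i \<in> blk n J"
proof -
  have sm: "strict_mono n" and n_0: "n 0 = 0" using assms by (auto simp: block_structure_def)
  define S where "S = {J. n J \<le> i}"
  have ge: "J \<le> n J" for J using sm by (rule strict_mono_imp_increasing)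
  have fin: "finite S" unfolding S_def
    by (rule finite_subset[of _ "{..i}"]) (auto intro: order_trans[OF ge])
  have "0 \<in> S" using n_0 by (simp add: S_def)
  define J where "J = Max S"
  have "J \<in> S" using fin \<open>0 \<in> S\<close> unfolding J_def by (intro Max_in) auto
  moreover have "Suc J \<notin> S"
  proof
    assume "Suc J \<in> S"
    hence "Suc J \<le> J" unfolding J_def using fin by (simp add: Max_ge)
    thus False by simp
  qed
  ultimately show ?thesis by (auto simp: S_def blk_def not_le)
qed

lemma blk_uniq:
  assumes "block_structure n" "i \<in> blk n J" "i \<in> blk n K"
  shows "J = K"
proof -
  have sm: "strict_mono n" using assms by (auto simp: block_structure_def)
  have False if "J < K" "i \<in> blk n J" "i \<in> blk n K" for J K
  proof -
    have "n (Suc J) \<le> n K" using that(1) sm by (simp add: strict_mono_less_eq Suc_leI)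
    thus False using that by (auto simp: blk_def)
  qed
  thus ?thesis using assms by (cases J K rule: linorder_cases) auto
qed

lemma blk_index_mem: "block_structure n \<Longrightarrow> i \<in> blk n (blk_index n i)"
proof -
  assume blocks: "block_structure n"
  have "\<exists>!J. i \<in> blk n J" using blk_ex[OF blocks] blk_uniq[OF blocks] by blast
  thus ?thesis unfolding blk_index_def by (rule theI')
qed

lemma blk_index_eq: "block_structure n \<Longrightarrow> i \<in> blk n J \<Longrightarrow> blk_index n i = J"
  using blk_index_mem blk_uniq by blast

lemma less_n_iff_blk_index: "block_structure n \<Longrightarrow> i < n K \<longleftrightarrow> blk_index n i < K"
proof -
  assume blocks: "block_structure n"
  have sm: "strict_mono n" using blocks by (auto simp: block_structure_def)
  have b: "n (blk_index n i) \<le> i" "i < n (Suc (blk_index n i))"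
    using blk_index_mem[OF blocks, of i] by (auto simp: blk_def)
  show ?thesis
  proof
    assume "i < n K"
    show "blk_index n i < K"
    proof (rule ccontr)
      assume "\<not> blk_index n i < K"
      hence "n K \<le> n (blk_index n i)" using sm by (simp add: strict_mono_less_eq)
      thus False using b \<open>i < n K\<close> by simp
    qed
  next
    assume "blk_index n i < K"
    hence "n (Suc (blk_index n i)) \<le> n K" using sm by (simp add: strict_mono_less_eq Suc_leI)
    thus "i < n K" using b by simp
  qed
qed

lemma block_structure_ge: "block_structure n \<Longrightarrow> K \<le> n K"
  by (simp add: block_structure_def strict_mono_imp_increasing)

lemma blk_finite[simp]: "finite (blk n J)" by (simp add: blk_def)

lemma mem_blk_iff_blk_index: "block_structure n \<Longrightarrow> i \<in> blk n J \<longleftrightarrow> blk_index n i = J"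
  using blk_index_eq blk_index_mem by blast

lemma schur_test:
  fixes c :: "nat \<Rightarrow> nat \<Rightarrow> real" and eta e :: "nat \<Rightarrow> real"
  assumes c0: "\<And>I J. 0 \<le> c I J"
    and rowsum: "\<And>I. (\<Sum>J<Q. c I J) \<le> S" and colsum: "\<And>J. (\<Sum>I<Q. c I J) \<le> S"
    and e: "\<And>I. I < Q \<Longrightarrow> 0 \<le> e I \<and> e I \<le> (\<Sum>J<Q. c I J * eta J)"
  shows "(\<Sum>I<Q. (e I)\<^sup>2) \<le> S\<^sup>2 * (\<Sum>J<Q. (eta J)\<^sup>2)"
proof (cases "Q = 0")
  case False
  then have S0: "0 \<le> S" using rowsum[of 0] sum_nonneg[of "{..<Q}" "c 0"] c0
    by (meson order_trans)
  have row: "(e I)\<^sup>2 \<le> S * (\<Sum>J<Q. c I J * (eta J)\<^sup>2)" if I: "I < Q" for I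
  proof -
    have "(e I)\<^sup>2 \<le> (\<Sum>J<Q. c I J * eta J)\<^sup>2"
      using e[OF I] by (intro power_mono) auto
    also have "(\<Sum>J<Q. c I J * eta J) = (\<Sum>J<Q. sqrt (c I J) * (sqrt (c I J) * eta J))"
      by (rule sum.cong) (auto simp: c0 mult.assoc[symmetric])
    also have "(\<dots>)\<^sup>2 \<le> (\<Sum>J<Q. (sqrt (c I J))\<^sup>2) * (\<Sum>J<Q. (sqrt (c I J) * eta J)\<^sup>2)"
      by (rule Cauchy_Schwarz_ineq_sum)
    also have "\<dots> = (\<Sum>J<Q. c I J) * (\<Sum>J<Q. c I J * (eta J)\<^sup>2)"
      by (simp add: c0 power_mult_distrib)
    also have "\<dots> \<le> S * (\<Sum>J<Q. c I J * (eta J)\<^sup>2)"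
      by (rule mult_right_mono[OF rowsum]) (auto intro: sum_nonneg simp: c0)
    finally show ?thesis .
  qed
  have "(\<Sum>I<Q. \<Sum>J<Q. c I J * (eta J)\<^sup>2) = (\<Sum>J<Q. (eta J)\<^sup>2 * (\<Sum>I<Q. c I J))"
    by (subst sum.swap) (simp add: sum_distrib_left mult.commute)
  also have "\<dots> \<le> (\<Sum>J<Q. (eta J)\<^sup>2 * S)"
    by (intro sum_mono mult_left_mono[OF colsum]) simp
  finally have cols: "(\<Sum>I<Q. \<Sum>J<Q. c I J * (eta J)\<^sup>2) \<le> S * (\<Sum>J<Q. (eta J)\<^sup>2)"
    by (simp add: sum_distrib_left mult.commute)
  have "(\<Sum>I<Q. (e I)\<^sup>2) \<le> (\<Sum>I<Q. S * (\<Sum>J<Q. c I J * (eta J)\<^sup>2))"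
    by (rule sum_mono) (rule row, simp)
  also have "\<dots> = S * (\<Sum>I<Q. \<Sum>J<Q. c I J * (eta J)\<^sup>2)"
    by (simp add: sum_distrib_left)
  also have "\<dots> \<le> S * (S * (\<Sum>J<Q. (eta J)\<^sup>2))"
    by (rule mult_left_mono[OF cols S0])
  finally show ?thesis by (simp add: power2_eq_square)
qed simp

lemma schur_test_toeplitz:
  fixes a eta e :: "nat \<Rightarrow> real"
  assumes a0: "\<And>t. 0 \<le> a t" and aS: "\<And>T. (\<Sum>t<T. a t) \<le> S"
    and e: "\<And>I. I < Q \<Longrightarrow> 0 \<le> e I \<and> e I \<le> (\<Sum>J<Q. (if I \<le> J then a (J - I) else 0) * eta J)"
  shows "(\<Sum>I<Q. (e I)\<^sup>2) \<le> S\<^sup>2 * (\<Sum>J<Q. (eta J)\<^sup>2)"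
proof (rule schur_test[OF _ _ _ e])
  define c where "c I J = (if I \<le> J then a (J - I) else 0)" for I J
  show "0 \<le> (if I \<le> J then a (J - I) else 0)" for I J by (simp add: a0)
  have "(\<Sum>J<Q'. c I J) = (\<Sum>t<Q' - I. a t)" for I Q'
    by (induction Q') (auto simp: c_def Suc_diff_le not_less_eq_eq)
  then show "(\<Sum>J<Q. if I \<le> J then a (J - I) else 0) \<le> S" for I
    using aS[of "Q - I"] by (simp add: c_def)
  show "(\<Sum>I<Q. if I \<le> J then a (J - I) else 0) \<le> S" for J
  proof -
    have "(\<Sum>I<Q. if I \<le> J then a (J - I) else 0) = (\<Sum>I\<in>{..<Q} \<inter> {..<Suc J}. a (J - I))"
      by (subst sum.inter_restrict) (auto intro!: sum.cong simp: less_Suc_eq_le)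
    also have "\<dots> \<le> (\<Sum>I<Suc J. a (J - I))"
      by (rule sum_mono2) (simp_all add: a0)
    also have "\<dots> = (\<Sum>I<Suc J. a I)"
      using sum.nat_diff_reindex[of "\<lambda>I. a I" "Suc J"] by simp
    also have "\<dots> \<le> S" by (rule aS)
    finally show ?thesis .
  qed
qed

lemma exists_steps_covering_gap:
  fixes k t b :: nat
  assumes "0 < b"
  obtains m where "k \<le> m" "m = k \<or> (m - 1) * b < t" "k + t div b \<le> 2 * m"
proof (cases "t \<le> (k - 1) * b")
  case True
  have "t div b \<le> k - 1" using div_le_mono[OF True, of b] assms by simp
  then show ?thesis by (intro that[of k]) auto
next
  case False
  define m where "m = (t - 1) div b + 1"
  have "(k - 1) * b div b \<le> (t - 1) div b" using False by (intro div_le_mono) linarith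
  then have "k \<le> m" using assms by (simp add: m_def)
  moreover have "(m - 1) * b < t"
  proof -
    have "(m - 1) * b = (t - 1) div b * b" by (simp add: m_def)
    also have "\<dots> \<le> t - 1" by (rule div_times_less_eq_dividend)
    finally show ?thesis using False by linarith
  qed
  moreover have "t div b \<le> m"
  proof -
    have "m * b = (t - 1) div b * b + b" by (simp add: m_def)
    moreover have "t - 1 = (t - 1) div b * b + (t - 1) mod b" by simp
    moreover have "(t - 1) mod b < b" using assms by simp
    ultimately have "t - 1 < m * b" by linarith
    then have "t div b \<le> m * b div b" by (intro div_le_mono) linarith
    then show ?thesis using assms by simp
  qed
  ultimately show ?thesis by (intro that[of m]) auto
qed

lemma sum_lessThan_mult_div: "(\<Sum>t<b * m. f (t div b)) = (of_nat b :: real) * (\<Sum>j<m. f j)"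
proof (induction m)
  case 0
  then show ?case by simp
next
  case (Suc m)
  have "{..<b * Suc m} = {..<b * m} \<union> {b * m..<b * m + b}" by auto
  moreover have "{..<b * m} \<inter> {b * m..<b * m + b} = {}" by auto
  ultimately have "(\<Sum>t<b * Suc m. f (t div b)) = (\<Sum>t<b * m. f (t div b)) + (\<Sum>t\<in>{b * m..<b * m + b}. f (t div b))"
    by (simp add: sum.union_disjoint)
  also have "(\<Sum>t\<in>{b * m..<b * m + b}. f (t div b)) = (\<Sum>t\<in>{b * m..<b * m + b}. f m)"
  proof (rule sum.cong)
    fix t assume t: "t \<in> {b * m..<b * m + b}"
    define s where "s = t - b * m"
    have ts: "t = s + m * b" and sb: "s < b" using t by (auto simp: s_def)
    have "b \<noteq> 0" using sb by simp
    hence "t div b = s div b + m" unfolding ts by simp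
    hence "t div b = m" using sb by simp
    thus "f (t div b) = f m" by simp
  qed simp
  also have "\<dots> = of_nat b * f m" by simp
  finally show ?case using Suc by (simp add: distrib_left)
qed

locale block_LU =
  fixes M L U Uinv :: imat and n :: "nat \<Rightarrow> nat" and d :: "nat \<Rightarrow> nat \<Rightarrow> real" and b0 :: nat
  assumes M_bounded: "bounded_l2 M" and M_elliptic: "elliptic M" and blocks: "block_structure n"
    and M_banded: "blk_banded n b0 M" and d_metric: "nat_metric d" and M_in_B: "in_B d b0 M"
    and M_eq_LU: "\<forall>i j. M i j = mmul L U i j"
    and L_lower: "blk_lower n L" and L_unit: "blk_unit_diag n L" and U_upper: "blk_upper n U"
    and Uinv_inverse: "is_bounded_inverse U Uinv" and b0_ge1: "1 \<le> b0"
begin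

abbreviation "blk_of \<equiv> blk_index n"

lemma mem_blk_of: "i \<in> blk n (blk_of i)" by (rule blk_index_mem[OF blocks])
lemma less_n_iff: "i < n K \<longleftrightarrow> blk_of i < K"
  by (rule less_n_iff_blk_index[OF blocks])
lemma mem_blk_iff: "i \<in> blk n J \<longleftrightarrow> blk_of i = J"
  by (rule mem_blk_iff_blk_index[OF blocks])
lemma le_n: "K \<le> n K" by (rule block_structure_ge[OF blocks])

lemma d_refl: "d i i = 0" using d_metric by (simp add: nat_metric_def)
lemma d_triangle: "d i k \<le> d i j + d j k" using d_metric by (simp add: nat_metric_def)

lemma M_nonzero_near:
  assumes h: "M i j \<noteq> 0"
  shows "d i j \<le> real b0 \<and> blk_of j \<le> blk_of i + b0 \<and> blk_of i \<le> blk_of j + b0"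
proof -
  have "d i j \<le> b0"
  proof (rule ccontr)
    assume "\<not> d i j \<le> real b0"
    hence "d i j > real b0" by simp
    hence "M i j = 0" using M_in_B unfolding in_B_def by blast
    thus False using h by simp
  qed
  moreover have "\<not> (\<bar>int (blk_of i) - int (blk_of j)\<bar> > int b0)"
  proof
    assume "\<bar>int (blk_of i) - int (blk_of j)\<bar> > int b0"
    hence "blk_zero n M (blk_of i) (blk_of j)" using M_banded by (simp add: blk_banded_def)
    hence "M i j = 0" using mem_blk_of[of i] mem_blk_of[of j] by (simp add: blk_zero_def)
    thus False using h by simp
  qed
  ultimately show ?thesis by linarith
qed

lemma U_nonzero_upper: "U i j \<noteq> 0 \<Longrightarrow> blk_of i \<le> blk_of j"
proof (rule ccontr)
  assume "U i j \<noteq> 0" "\<not> blk_of i \<le> blk_of j"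
  hence "blk_zero n U (blk_of i) (blk_of j)" using U_upper by (simp add: blk_upper_def)
  hence "U i j = 0" using mem_blk_of[of i] mem_blk_of[of j] by (simp add: blk_zero_def)
  thus False using \<open>U i j \<noteq> 0\<close> by simp
qed

lemma L_nonzero_lower: "L i j \<noteq> 0 \<Longrightarrow> blk_of j \<le> blk_of i"
proof (rule ccontr)
  assume "L i j \<noteq> 0" "\<not> blk_of j \<le> blk_of i"
  hence "blk_zero n L (blk_of i) (blk_of j)" using L_lower by (simp add: blk_lower_def)
  hence "L i j = 0" using mem_blk_of[of i] mem_blk_of[of j] by (simp add: blk_zero_def)
  thus False using \<open>L i j \<noteq> 0\<close> by simp
qed

lemma L_diag_block: "blk_of i = blk_of j \<Longrightarrow> L i j = (if i = j then 1 else 0)"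
proof -
  assume "blk_of i = blk_of j"
  hence "i \<in> blk n (blk_of i)" "j \<in> blk n (blk_of i)"
    using mem_blk_of[of i] mem_blk_of[of j] by auto
  thus ?thesis using L_unit unfolding blk_unit_diag_def by blast
qed

lemma U_bounded: "bounded_l2 U" and Uinv_bounded: "bounded_l2 Uinv"
  using Uinv_inverse by (auto simp: is_bounded_inverse_def)

lemma U_Uinv: "l2 x \<Longrightarrow> mv U (mv Uinv x) = x" "l2 x \<Longrightarrow> mv Uinv (mv U x) = x"
  using Uinv_inverse by (auto simp: is_bounded_inverse_def)

definition normM :: real where
  "normM = opnorm2 M"

definition normU :: real where
  "normU = opnorm2 U + 1" \<comment> \<open>shifted to be positive\<close>

definition normUinv :: real where
  "normUinv = opnorm2 Uinv"

lemma normM_nonneg: "0 \<le> normM" by (simp add: normM_def opnorm2_nonneg[OF M_bounded])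
lemma normU_pos: "0 < normU" using opnorm2_nonneg[OF U_bounded] by (simp add: normU_def)
lemma normUinv_nonneg: "0 \<le> normUinv"
  by (simp add: normUinv_def opnorm2_nonneg[OF Uinv_bounded])

lemma M_norm: "l2 x \<Longrightarrow> l2 (mv M x) \<and> l2norm (mv M x) \<le> normM * l2norm x"
  using bounded_l2_l2[OF M_bounded] opnorm2_bound[OF M_bounded] by (simp add: normM_def)

lemma U_norm: "l2 x \<Longrightarrow> l2 (mv U x) \<and> l2norm (mv U x) \<le> normU * l2norm x"
proof -
  assume x: "l2 x"
  have "l2norm (mv U x) \<le> opnorm2 U * l2norm x" by (rule opnorm2_bound[OF U_bounded x])
  also have "\<dots> \<le> normU * l2norm x" unfolding normU_def using l2norm_nonneg[OF x]
    by (simp add: distrib_right)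
  finally show ?thesis using bounded_l2_l2[OF U_bounded x] by simp
qed

lemma Uinv_norm: "l2 x \<Longrightarrow> l2 (mv Uinv x) \<and> l2norm (mv Uinv x) \<le> normUinv * l2norm x"
  using bounded_l2_l2[OF Uinv_bounded] opnorm2_bound[OF Uinv_bounded] by (simp add: normUinv_def)

definition cE :: real where
  "cE = (SOME C. C > 0 \<and> (\<forall>x. l2 x \<longrightarrow> l2inner (mv M x) x \<ge> C * (l2norm x)\<^sup>2))"

lemma cE: "0 < cE" "l2 x \<Longrightarrow> l2inner (mv M x) x \<ge> cE * (l2norm x)\<^sup>2"
proof -
  have ex: "\<exists>C. C > 0 \<and> (\<forall>x. l2 x \<longrightarrow> l2inner (mv M x) x \<ge> C * (l2norm x)\<^sup>2)"
    using M_elliptic by (simp add: elliptic_def)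
  from someI_ex[OF ex] show "0 < cE" "l2 x \<Longrightarrow> l2inner (mv M x) x \<ge> cE * (l2norm x)\<^sup>2"
    unfolding cE_def by auto
qed

text \<open>For w supported below N and A_N = sect N, ellipticity gives
  norm (w - \<omega> A_N w)^2 \<le> (1 - 2 \<omega> cE + \<omega>^2 normM^2) norm w^2, and the factor is below 1
  for the \<omega> chosen here.\<close>

definition omega :: real where
  "omega = cE / (normM\<^sup>2 + cE\<^sup>2)"

definition q_sq :: real where
  "q_sq = 1 - 2 * omega * cE + omega\<^sup>2 * normM\<^sup>2"

definition q :: real where
  "q = sqrt (max 0 q_sq)"

lemma omega_pos: "0 < omega"
  using cE(1) by (simp add: omega_def add_nonneg_pos)

lemma q_sq_less_1: "q_sq < 1"
proof -
  have den: "0 < normM\<^sup>2 + cE\<^sup>2" using cE(1) by (simp add: add_nonneg_pos)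
  have "omega * normM\<^sup>2 < 2 * cE"
  proof -
    have "omega * normM\<^sup>2 = cE * (normM\<^sup>2 / (normM\<^sup>2 + cE\<^sup>2))"
      by (simp add: omega_def)
    also have "normM\<^sup>2 / (normM\<^sup>2 + cE\<^sup>2) \<le> 1" using den by simp
    hence "cE * (normM\<^sup>2 / (normM\<^sup>2 + cE\<^sup>2)) \<le> cE" using cE(1)
      by (intro mult_left_le) auto
    finally show ?thesis using cE(1) by simp
  qed
  hence "omega * (omega * normM\<^sup>2) < omega * (2 * cE)" using omega_pos by simp
  thus ?thesis by (simp add: q_sq_def power2_eq_square algebra_simps)
qed

lemma q_props: "0 \<le> q" "q < 1" "q_sq \<le> q\<^sup>2"
  using q_sq_less_1 by (auto simp: q_def real_sqrt_lt_1_iff)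

definition sect :: "nat \<Rightarrow> ivec \<Rightarrow> ivec" where
  "sect N x = (\<lambda>i. if i < N then \<Sum>j<N. M i j * x j else 0)"

definition richardson :: "nat \<Rightarrow> ivec \<Rightarrow> ivec" where
  "richardson N x = (\<lambda>i. x i - omega * sect N x i)"

definition neumann :: "nat \<Rightarrow> nat \<Rightarrow> ivec \<Rightarrow> ivec" where
  "neumann N k x = (\<lambda>i. omega * (\<Sum>m<k. (richardson N ^^ m) x i))"

lemma seq_linear_sect: "seq_linear (sect N)"
proof -
  have "sect N (\<lambda>i. x i + y i) = (\<lambda>i. sect N x i + sect N y i)" for x y
    by (simp add: sect_def fun_eq_iff sum.distrib distrib_left)
  moreover have "sect N (\<lambda>i. a * x i) = (\<lambda>i. a * sect N x i)" for a x
    by (simp add: sect_def fun_eq_iff sum_distrib_left mult.left_commute)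
  ultimately show ?thesis by (simp add: seq_linear_def)
qed

lemma seq_linear_richardson: "seq_linear (richardson N)"
proof -
  have "richardson N (\<lambda>i. x i + y i) = (\<lambda>i. richardson N x i + richardson N y i)" for x y
    by (simp add: richardson_def seq_linear_add[OF seq_linear_sect] algebra_simps)
  moreover have "richardson N (\<lambda>i. a * x i) = (\<lambda>i. a * richardson N x i)" for a x
    by (simp add: richardson_def seq_linear_scale[OF seq_linear_sect] algebra_simps)
  ultimately show ?thesis by (simp add: seq_linear_def)
qed

lemma seq_linear_richardson_pow: "seq_linear (richardson N ^^ m)"
  by (rule seq_linear_funpow[OF seq_linear_richardson])

lemma seq_linear_neumann: "seq_linear (neumann N k)"
proof -
  have "neumann N k (\<lambda>i. x i + y i) = (\<lambda>i. neumann N k x i + neumann N k y i)" for x y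
    by (simp add: neumann_def seq_linear_add[OF seq_linear_richardson_pow] sum.distrib algebra_simps)
  moreover have "neumann N k (\<lambda>i. a * x i) = (\<lambda>i. a * neumann N k x i)" for a x
    by (simp add: neumann_def seq_linear_scale[OF seq_linear_richardson_pow] sum_distrib_left algebra_simps)
  ultimately show ?thesis by (simp add: seq_linear_def)
qed

lemma richardson_sect: "richardson N (sect N x) = sect N (richardson N x)"
proof -
  have "sect N (richardson N x) = (\<lambda>i. sect N x i - omega * sect N (sect N x) i)"
    unfolding richardson_def
      using seq_linear_diff[OF seq_linear_sect, of N x "\<lambda>i. omega * sect N x i"] seq_linear_scale[OF seq_linear_sect]
    by simp
  thus ?thesis by (simp add: richardson_def)
qed

lemma richardson_pow_sect: "(richardson N ^^ m) (sect N x) = sect N ((richardson N ^^ m) x)"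
  by (induction m) (simp_all add: richardson_sect)

lemma neumann_sect: "neumann N k (sect N v) = (\<lambda>i. v i - (richardson N ^^ k) v i)"
proof (rule ext)
  fix i
  have "neumann N k (sect N v) i = (\<Sum>m<k. omega * sect N ((richardson N ^^ m) v) i)"
    by (simp add: neumann_def richardson_pow_sect sum_distrib_left)
  also have "\<dots> = (\<Sum>m<k. (richardson N ^^ m) v i - (richardson N ^^ Suc m) v i)"
    by (simp add: richardson_def)
  also have "\<dots> = v i - (richardson N ^^ k) v i"
    by (subst sum_lessThan_telescope') simp
  finally show "neumann N k (sect N v) i = v i - (richardson N ^^ k) v i" .
qed

lemma supp_lt_sect: "supp_lt N (sect N x)" by (simp add: supp_lt_def sect_def)
lemma supp_lt_richardson: "supp_lt N x \<Longrightarrow> supp_lt N (richardson N x)"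
  using supp_lt_sect[of N x] by (simp add: supp_lt_def richardson_def)
lemma supp_lt_richardson_pow: "supp_lt N x \<Longrightarrow> supp_lt N ((richardson N ^^ m) x)"
  by (induction m) (simp_all add: supp_lt_richardson)
lemma supp_lt_neumann: "supp_lt N x \<Longrightarrow> supp_lt N (neumann N k x)"
  using supp_lt_richardson_pow[of N x] by (simp add: supp_lt_def neumann_def)

lemma sect_supp_lt: "supp_lt N x \<Longrightarrow> sect N x = (\<lambda>i. if i < N then mv M x i else 0)"
  by (simp add: sect_def mv_supp_lt[of N] fun_eq_iff)

lemma l2norm_power2_supp_lt: "supp_lt N x \<Longrightarrow> (l2norm x)\<^sup>2 = (\<Sum>i<N. (x i)\<^sup>2)"
  using l2norm_supp_lt[of N x] by (simp add: L2_set_power2)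

lemma richardson_contr:
  assumes w: "supp_lt N w"
  shows "l2norm (richardson N w) \<le> q * l2norm w"
proof -
  define s where "s = (\<Sum>i<N. (w i)\<^sup>2)"
  define p where "p = (\<Sum>i<N. mv M w i * w i)"
  define r where "r = (\<Sum>i<N. (mv M w i)\<^sup>2)"
  have l2w: "l2 w" using w by (rule l2_supp_lt)
  have s0: "0 \<le> s" unfolding s_def by (simp add: sum_nonneg)
  have ws: "(l2norm w)\<^sup>2 = s" unfolding s_def by (rule l2norm_power2_supp_lt[OF w])
  have Rw: "richardson N w i = w i - omega * mv M w i" if "i < N" for i
    using that by (simp add: richardson_def sect_supp_lt[OF w])
  have "(l2norm (richardson N w))\<^sup>2 = (\<Sum>i<N. (richardson N w i)\<^sup>2)"
    by (rule l2norm_power2_supp_lt[OF supp_lt_richardson[OF w]])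
  also have "\<dots> = (\<Sum>i<N. (w i - omega * mv M w i)\<^sup>2)"
    by (rule sum.cong) (simp_all add: Rw)
  also have "\<dots> = (\<Sum>i<N. (w i)\<^sup>2 - 2 * omega * (mv M w i * w i) + omega\<^sup>2 * (mv M w i)\<^sup>2)"
    by (rule sum.cong) (auto simp: power2_eq_square algebra_simps)
  also have "\<dots> = s - 2 * omega * p + omega\<^sup>2 * r"
    by (simp add: s_def p_def r_def sum.distrib sum_subtractf sum_distrib_left)
  also have "\<dots> \<le> s - 2 * omega * (cE * s) + omega\<^sup>2 * (normM\<^sup>2 * s)"
  proof -
    have "p = l2inner (mv M w) w" by (simp add: p_def l2inner_supp_lt[OF w])
    also have "\<dots> \<ge> cE * (l2norm w)\<^sup>2" by (rule cE(2)[OF l2w])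
    finally have p: "cE * s \<le> p" by (simp add: s_def l2norm_power2_supp_lt[OF w])
    have "r \<le> (\<Sum>i. (mv M w i)\<^sup>2)" unfolding r_def
      using M_norm[OF l2w] by (intro sum_le_suminf) (auto simp: l2_def)
    also have "\<dots> = (l2norm (mv M w))\<^sup>2" using M_norm[OF l2w]
      by (simp add: l2norm_power2)
    also have "\<dots> \<le> (normM * l2norm w)\<^sup>2"
      using M_norm[OF l2w] l2norm_nonneg[of "mv M w"] by (intro power_mono) auto
    also have "\<dots> = normM\<^sup>2 * s"
      by (simp add: power_mult_distrib s_def l2norm_power2_supp_lt[OF w])
    finally have r: "r \<le> normM\<^sup>2 * s" .
    have "2 * omega * (cE * s) \<le> 2 * omega * p" using p omega_pos by simp
    moreover have "omega\<^sup>2 * r \<le> omega\<^sup>2 * (normM\<^sup>2 * s)" using r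
      by (simp add: mult_left_mono)
    ultimately show ?thesis by linarith
  qed
  also have "\<dots> = q_sq * s" unfolding q_sq_def
    by (simp only: distrib_right left_diff_distrib mult.left_neutral mult.assoc)
  also have "\<dots> \<le> q\<^sup>2 * s" using q_props(3) s0 by (rule mult_right_mono)
  also have "\<dots> = (q * l2norm w)\<^sup>2" by (simp add: power_mult_distrib ws)
  finally have "(l2norm (richardson N w))\<^sup>2 \<le> (q * l2norm w)\<^sup>2" .
  thus ?thesis
    by (rule power2_le_imp_le) (use q_props(1) l2norm_nonneg[OF l2w] in auto)
qed

lemma richardson_pow_contr:
  assumes w: "supp_lt N w"
  shows "l2norm ((richardson N ^^ m) w) \<le> q ^ m * l2norm w"
proof (induction m)
  case 0
  then show ?case by simp
next
  case (Suc m)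
  have "l2norm ((richardson N ^^ Suc m) w) \<le> q * l2norm ((richardson N ^^ m) w)"
    using richardson_contr[OF supp_lt_richardson_pow[OF w, of m]] by simp
  also have "\<dots> \<le> q * (q ^ m * l2norm w)" using Suc q_props(1) by (rule mult_left_mono)
  finally show ?case by simp
qed

lemma richardson_pow_nonzero:
  "(richardson N ^^ m) x i \<noteq> 0 \<Longrightarrow> \<exists>j. x j \<noteq> 0 \<and> d i j \<le> real (m * b0) \<and> blk_of j \<le> blk_of i + m * b0"
proof (induction m arbitrary: i)
  case 0
  then show ?case using d_refl[of i] by auto
next
  case (Suc m)
  define y where "y = (richardson N ^^ m) x"
  have "richardson N y i \<noteq> 0" using Suc.prems by (simp add: y_def)
  hence "y i \<noteq> 0 \<or> sect N y i \<noteq> 0" by (auto simp: richardson_def)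
  thus ?case
  proof
    assume "y i \<noteq> 0"
    then obtain j where "x j \<noteq> 0" "d i j \<le> real (m * b0)" "blk_of j \<le> blk_of i + m * b0"
      using Suc.IH y_def by blast
    moreover have "real (m * b0) \<le> real (Suc m * b0)" by simp
    ultimately show ?thesis by (intro exI[of _ j]) auto
  next
    assume "sect N y i \<noteq> 0"
    hence "(\<Sum>j<N. M i j * y j) \<noteq> 0" by (auto simp: sect_def split: if_splits)
    then obtain j' where "M i j' * y j' \<noteq> 0" by (rule sum.not_neutral_contains_not_neutral)
    hence Mij: "M i j' \<noteq> 0" and yj: "y j' \<noteq> 0" by auto
    from Suc.IH[of j'] yj obtain j where j: "x j \<noteq> 0" "d j' j \<le> real (m * b0)" "blk_of j \<le> blk_of j' + m * b0"
      using y_def by blast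
    from M_nonzero_near[OF Mij] have m: "d i j' \<le> real b0" "blk_of j' \<le> blk_of i + b0"
      by auto
    have "d i j \<le> d i j' + d j' j" by (rule d_triangle)
    also have "\<dots> \<le> real b0 + real (m * b0)" using m j by simp
    also have "\<dots> = real (Suc m * b0)" by simp
    finally show ?thesis using j m by (intro exI[of _ j]) auto
  qed
qed

lemma neumann_nonzero:
  assumes "neumann N k x i \<noteq> 0"
  shows "\<exists>j. x j \<noteq> 0 \<and> d i j \<le> real ((k - 1) * b0) \<and> blk_of j \<le> blk_of i + (k - 1) * b0"
proof -
  have "(\<Sum>m<k. (richardson N ^^ m) x i) \<noteq> 0" using assms by (auto simp: neumann_def)
  then obtain m where m: "m < k" "(richardson N ^^ m) x i \<noteq> 0"
    by (rule sum.not_neutral_contains_not_neutral) simp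
  then obtain j where j: "x j \<noteq> 0" "d i j \<le> real (m * b0)" "blk_of j \<le> blk_of i + m * b0"
    using richardson_pow_nonzero by blast
  have "m \<le> k - 1" using m(1) by simp
  hence mk: "m * b0 \<le> (k - 1) * b0" by (rule mult_right_mono) simp
  hence "real (m * b0) \<le> real ((k - 1) * b0)" by (simp only: of_nat_le_iff)
  hence "d i j \<le> real ((k - 1) * b0)" using j(2) by linarith
  moreover have "blk_of j \<le> blk_of i + (k - 1) * b0" using j(3) mk by linarith
  ultimately show ?thesis using j(1) by blast
qed

lemma mv_M_nonzero:
  assumes "supp_lt N x" "mv M x i \<noteq> 0"
  obtains j where "M i j \<noteq> 0" "x j \<noteq> 0"
proof -
  have "(\<Sum>j<N. M i j * x j) \<noteq> 0" using assms by (simp add: mv_supp_lt)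
  then obtain j where "M i j * x j \<noteq> 0" by (rule sum.not_neutral_contains_not_neutral)
  then show ?thesis using that mult_eq_0_iff by metis
qed

lemma n_strict_mono: "strict_mono n" using blocks by (simp add: block_structure_def)
lemma n_0: "n 0 = 0" using blocks by (simp add: block_structure_def)
lemma n_le_Suc: "n Q \<le> n (Suc Q)" using n_strict_mono by (simp add: strict_mono_less_eq)
lemma n_mono: "Q \<le> Q' \<Longrightarrow> n Q \<le> n Q'" using n_strict_mono
  by (simp add: strict_mono_less_eq)

lemma U_supp_lt: assumes x: "supp_lt (n K) x" shows "supp_lt (n K) (mv U x)"
  unfolding supp_lt_def
proof (intro allI impI)
  fix i assume i: "n K \<le> i"
  have zz: "U i j * x j = 0" if "j < n K" for j
  proof -
    have "blk_of j < K" using that less_n_iff by simp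
    moreover have "\<not> blk_of i < K" using i less_n_iff[of i K] by simp
    ultimately have "U i j = 0" using U_nonzero_upper[of i j] by fastforce
    thus ?thesis by simp
  qed
  have "mv U x i = (\<Sum>j<n K. U i j * x j)" by (rule mv_supp_lt[OF x])
  also have "\<dots> = 0" by (rule sum.neutral) (simp add: zz)
  finally show "mv U x i = 0" .
qed

text \<open>U maps the vectors supported below n K injectively into themselves, hence onto them.\<close>

lemma Uinv_supp_lt: assumes y: "supp_lt (n K) y" shows "supp_lt (n K) (mv Uinv y)"
proof -
  let ?N = "n K"
  have inj: "\<forall>i<?N. x i = 0" if xf: "supp_lt ?N x" and h: "\<forall>i<?N. (\<Sum>j<?N. U i j * x j) = 0" for x
  proof -
    have "mv U x = (\<lambda>i. 0)"
    proof (rule ext)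
      fix i show "mv U x i = 0"
      proof (cases "i < ?N")
        case True thus ?thesis using h mv_supp_lt[OF xf, of U i] by simp
      next
        case False thus ?thesis using U_supp_lt[OF xf] by (simp add: supp_lt_def)
      qed
    qed
    have "x = mv Uinv (mv U x)" by (simp add: U_Uinv(2)[OF l2_supp_lt[OF xf]])
    also have "\<dots> = (\<lambda>i. 0)" unfolding \<open>mv U x = (\<lambda>i. 0)\<close> by simp
    finally show ?thesis by simp
  qed
  obtain x where x: "supp_lt ?N x" "\<forall>i<?N. (\<Sum>j<?N. U i j * x j) = y i"
    using finite_system_solvable[of ?N U y] inj by blast
  have "mv U x = y"
  proof (rule ext)
    fix i show "mv U x i = y i"
    proof (cases "i < ?N")
      case True thus ?thesis using x mv_supp_lt[OF x(1), of U i] by simp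
    next
      case False thus ?thesis using U_supp_lt[OF x(1)] y by (simp add: supp_lt_def)
    qed
  qed
  hence "mv Uinv y = x" using U_Uinv(2)[OF l2_supp_lt[OF x(1)]] by simp
  thus ?thesis using x(1) by simp
qed

lemma mv_M_via_LU:
  assumes x: "supp_lt N x"
  shows "mv M x i = (\<Sum>k<n (Suc (blk_of i)). L i k * mv U x k)"
proof -
  let ?K = "n (Suc (blk_of i))"
  have mm: "M i j = (\<Sum>k<?K. L i k * U k j)" for j
  proof -
    have "M i j = mmul L U i j" using M_eq_LU by simp
    also have "\<dots> = (\<Sum>k<?K. L i k * U k j)" unfolding mmul_def
    proof (rule suminf_supp_lt(1))
      fix k assume "?K \<le> k"
      hence "\<not> blk_of k \<le> blk_of i" using less_n_iff[of k "Suc (blk_of i)"] by simp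
      hence "L i k = 0" using L_nonzero_lower by force
      thus "L i k * U k j = 0" by simp
    qed
    finally show ?thesis .
  qed
  have "mv M x i = (\<Sum>j<N. M i j * x j)" by (rule mv_supp_lt[OF x])
  also have "\<dots> = (\<Sum>j<N. \<Sum>k<?K. L i k * U k j * x j)"
    by (simp add: mm sum_distrib_right)
  also have "\<dots> = (\<Sum>k<?K. \<Sum>j<N. L i k * U k j * x j)" by (rule sum.swap)
  also have "\<dots> = (\<Sum>k<?K. L i k * mv U x k)"
    by (simp add: mv_supp_lt[OF x] sum_distrib_left mult.assoc)
  finally show ?thesis .
qed

lemma L_block_solve:
  assumes z: "\<And>k. z k \<noteq> 0 \<Longrightarrow> blk_of k = J" and i: "i < n (Suc J)"
  shows "(\<Sum>k<n (Suc (blk_of i)). L i k * z k) = z i"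
proof -
  let ?K = "n (Suc (blk_of i))"
  have iJ: "blk_of i \<le> J" using i less_n_iff by simp
  have t: "L i k * z k = (if k = i then z i else 0)" if k: "k < ?K" for k
  proof (cases "z k = 0")
    case True thus ?thesis by auto
  next
    case False
    hence "blk_of k = J" using z by simp
    moreover have "blk_of k \<le> blk_of i" using k less_n_iff by simp
    ultimately have "blk_of i = blk_of k" using iJ by simp
    thus ?thesis using L_diag_block[of i k] by auto
  qed
  have "(\<Sum>k<?K. L i k * z k) = (\<Sum>k<?K. if k = i then z i else 0)"
    by (rule sum.cong) (auto simp: t)
  also have "\<dots> = z i" using mem_blk_of[of i] by (simp add: blk_def)
  finally show ?thesis .
qed

lemma supp_lt_of_blk: "(\<And>k. z k \<noteq> 0 \<Longrightarrow> blk_of k = J) \<Longrightarrow> supp_lt (n (Suc J)) z"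
  unfolding supp_lt_def using less_n_iff by (metis lessI not_le)

lemma M_Uinv_blk:
  assumes z: "\<And>k. z k \<noteq> 0 \<Longrightarrow> blk_of k = J"
  shows "supp_lt (n (Suc J)) (mv Uinv z)" and "\<And>i. i < n (Suc J) \<Longrightarrow> mv M (mv Uinv z) i = z i"
proof -
  have zf: "supp_lt (n (Suc J)) z" by (rule supp_lt_of_blk[OF z])
  show xf: "supp_lt (n (Suc J)) (mv Uinv z)" by (rule Uinv_supp_lt[OF zf])
  fix i assume i: "i < n (Suc J)"
  have "mv M (mv Uinv z) i = (\<Sum>k<n (Suc (blk_of i)). L i k * mv U (mv Uinv z) k)"
    by (rule mv_M_via_LU[OF xf])
  also have "\<dots> = (\<Sum>k<n (Suc (blk_of i)). L i k * z k)"
    using U_Uinv(1)[OF l2_supp_lt[OF zf]] by simp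
  also have "\<dots> = z i" by (rule L_block_solve[OF z i])
  finally show "mv M (mv Uinv z) i = z i" .
qed

definition blk_proj :: "nat \<Rightarrow> ivec \<Rightarrow> ivec" where
  "blk_proj J x = (\<lambda>i. if blk_of i = J then x i else 0)"

lemma blk_proj_nonzero: "blk_proj J x i \<noteq> 0 \<Longrightarrow> blk_of i = J"
  by (simp add: blk_proj_def split: if_splits)

lemma supp_lt_blk_proj: "supp_lt (n (Suc J)) (blk_proj J x)"
  by (rule supp_lt_of_blk) (rule blk_proj_nonzero)

lemma sum_blk_proj: assumes x: "supp_lt (n Q) x" shows "x = (\<lambda>i. \<Sum>J<Q. blk_proj J x i)"
proof (rule ext)
  fix i
  have "(\<Sum>J<Q. blk_proj J x i) = (\<Sum>J<Q. if J = blk_of i then x i else 0)"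
    by (rule sum.cong) (auto simp: blk_proj_def)
  also have "\<dots> = (if blk_of i < Q then x i else 0)" by simp
  also have "\<dots> = x i" using x less_n_iff[of i Q] by (auto simp: supp_lt_def)
  finally show "x i = (\<Sum>J<Q. blk_proj J x i)" by simp
qed

lemma sum_lessThan_n_blocks: "(\<Sum>i<n Q. f i) = (\<Sum>J<Q. \<Sum>i\<in>blk n J. f i)"
proof (induction Q)
  case 0
  then show ?case by (simp add: n_0)
next
  case (Suc Q)
  have "{..<n (Suc Q)} = {..<n Q} \<union> blk n Q" using n_le_Suc[of Q] by (auto simp: blk_def)
  moreover have "{..<n Q} \<inter> blk n Q = {}" by (auto simp: blk_def)
  ultimately have "(\<Sum>i<n (Suc Q). f i) = (\<Sum>i<n Q. f i) + (\<Sum>i\<in>blk n Q. f i)"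
    by (simp add: sum.union_disjoint)
  thus ?case using Suc by simp
qed

lemma L2_set_zero_outside:
  assumes "finite Y" "X \<subseteq> Y" "\<And>i. i \<in> Y - X \<Longrightarrow> f i = 0"
  shows "L2_set f Y = L2_set f X"
  unfolding L2_set_def using assms by (intro arg_cong[where f=sqrt] sum.mono_neutral_right) auto

lemma blk_subset: "blk n J \<subseteq> {..<n (Suc J)}" by (auto simp: blk_def)

lemma l2norm_blk_proj: "l2norm (blk_proj J x) = L2_set x (blk n J)"
proof -
  have "l2norm (blk_proj J x) = L2_set (blk_proj J x) {..<n (Suc J)}"
    by (rule l2norm_supp_lt[OF supp_lt_blk_proj])
  also have "\<dots> = L2_set (blk_proj J x) (blk n J)"
    by (rule L2_set_zero_outside) (auto simp: blk_def blk_proj_def mem_blk_iff[symmetric])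
  also have "\<dots> = L2_set x (blk n J)"
    by (rule L2_set_cong) (auto simp: blk_proj_def mem_blk_iff)
  finally show ?thesis .
qed

lemma l2norm_power2_blocks:
  assumes "supp_lt (n Q) x"
  shows "(l2norm x)\<^sup>2 = (\<Sum>J<Q. (L2_set x (blk n J))\<^sup>2)"
  using l2norm_power2_supp_lt[OF assms] sum_lessThan_n_blocks[where Q=Q and f="\<lambda>i. (x i)\<^sup>2"] by (simp add: L2_set_power2)

lemma L2_set_blk_le_l2norm: "supp_lt N x \<Longrightarrow> L2_set x (blk n J) \<le> l2norm x"
proof -
  assume x: "supp_lt N x"
  let ?N = "max N (n (Suc J))"
  have "supp_lt ?N x" using x by (rule supp_lt_mono) simp
  hence "l2norm x = L2_set x {..<?N}" by (rule l2norm_supp_lt)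
  moreover have "L2_set x (blk n J) \<le> L2_set x {..<?N}"
    by (rule L2_set_mono_set) (auto simp: blk_def)
  ultimately show ?thesis by simp
qed

definition r :: real where "r = sqrt q"

lemma r_props: "0 \<le> r" "r < 1" "q = r\<^sup>2" "r \<le> 1"
  using q_props by (auto simp: r_def real_sqrt_lt_1_iff)

lemma b0_pos: "0 < b0" using b0_ge1 by simp

text \<open>Column l of U^-1 is the solution of A_N v = e_l for N = n (blk_of l + 1), see
  sect_Uinv_blk; approx_Uinv k takes k terms of the Neumann series instead.\<close>

definition approx_Uinv :: "nat \<Rightarrow> imat" where
  "approx_Uinv k i l = neumann (n (Suc (blk_of l))) k (unit_vec l) i"

lemma unit_vec_supp_lt: "supp_lt (n (Suc (blk_of l))) (unit_vec l)"
  by (rule supp_lt_of_blk) (simp add: unit_vec_def split: if_splits)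

lemma approx_Uinv_nonzero_near:
  assumes nz: "approx_Uinv k i l \<noteq> 0"
  shows "d i l \<le> real ((k - 1) * b0) \<and> blk_of l \<le> blk_of i + (k - 1) * b0 \<and> blk_of i \<le> blk_of l"
proof -
  from neumann_nonzero[OF nz[unfolded approx_Uinv_def]] obtain j where j: "unit_vec l j \<noteq> 0" "d i j \<le> real ((k - 1) * b0)"
    "blk_of j \<le> blk_of i + (k - 1) * b0" by blast
  have jl: "j = l" using j(1) by (simp add: unit_vec_def split: if_splits)
  have "supp_lt (n (Suc (blk_of l))) (neumann (n (Suc (blk_of l))) k (unit_vec l))"
    by (rule supp_lt_neumann[OF unit_vec_supp_lt])
  hence "i < n (Suc (blk_of l))" using nz unfolding approx_Uinv_def supp_lt_def using not_le
    by blast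
  hence "blk_of i < Suc (blk_of l)" using less_n_iff by simp
  thus ?thesis using j jl by simp
qed

definition approx_Uinv_row_end :: "nat \<Rightarrow> nat \<Rightarrow> nat" where
  "approx_Uinv_row_end k i = n (Suc (blk_of i + k * b0))"

lemma approx_Uinv_row: "approx_Uinv k i l \<noteq> 0 \<Longrightarrow> l < approx_Uinv_row_end k i"
proof -
  assume "approx_Uinv k i l \<noteq> 0"
  hence "blk_of l \<le> blk_of i + (k - 1) * b0" using approx_Uinv_nonzero_near by blast
  moreover have "(k - 1) * b0 \<le> k * b0" by simp
  ultimately have "blk_of l < Suc (blk_of i + k * b0)" by linarith
  thus ?thesis unfolding approx_Uinv_row_end_def using less_n_iff by simp
qed

lemma mv_approx_Uinv: "mv (approx_Uinv k) x i = (\<Sum>l<approx_Uinv_row_end k i. approx_Uinv k i l * x l)"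
  unfolding mv_def by (rule suminf_supp_lt(1)) (use approx_Uinv_row in force)

lemma approx_Uinv_summable: "summable (\<lambda>l. approx_Uinv k i l * x l)"
  by (rule suminf_supp_lt(2)[of "approx_Uinv_row_end k i"]) (use approx_Uinv_row in force)

lemma approx_Uinv_blk:
  assumes y: "\<And>l. y l \<noteq> 0 \<Longrightarrow> blk_of l = J"
  shows "mv (approx_Uinv k) y = neumann (n (Suc J)) k y"
proof -
  let ?N = "n (Suc J)"
  have yf: "supp_lt ?N y" by (rule supp_lt_of_blk[OF y])
  have "neumann ?N k y = (\<lambda>i. \<Sum>l<?N. y l * neumann ?N k (unit_vec l) i)"
    by (rule seq_linear_sum_unit_vec[OF seq_linear_neumann yf])
  moreover have "mv (approx_Uinv k) y = (\<lambda>i. \<Sum>l<?N. approx_Uinv k i l * y l)"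
    by (rule ext) (rule mv_supp_lt[OF yf])
  moreover have "approx_Uinv k i l * y l = y l * neumann ?N k (unit_vec l) i" for i l
    using y[of l] by (cases "y l = 0") (simp_all add: approx_Uinv_def)
  ultimately show ?thesis by simp
qed

lemma sect_Uinv_blk:
  assumes y: "\<And>l. y l \<noteq> 0 \<Longrightarrow> blk_of l = J"
  shows "sect (n (Suc J)) (mv Uinv y) = y"
proof -
  let ?N = "n (Suc J)"
  have vf: "supp_lt ?N (mv Uinv y)" by (rule M_Uinv_blk(1)[OF y])
  have "sect ?N (mv Uinv y) = (\<lambda>i. if i < ?N then mv M (mv Uinv y) i else 0)"
    by (rule sect_supp_lt[OF vf])
  also have "\<dots> = (\<lambda>i. if i < ?N then y i else 0)" using M_Uinv_blk(2)[OF y]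
    by (simp add: fun_eq_iff)
  also have "\<dots> = y" using supp_lt_of_blk[OF y] by (simp add: fun_eq_iff supp_lt_def)
  finally show ?thesis .
qed

lemma Uinv_blk_split:
  assumes y: "\<And>l. y l \<noteq> 0 \<Longrightarrow> blk_of l = J"
  shows "mv Uinv y i = neumann (n (Suc J)) k y i + (richardson (n (Suc J)) ^^ k) (mv Uinv y) i"
  using neumann_sect[of "n (Suc J)" k "mv Uinv y"] sect_Uinv_blk[OF y] by (simp add: fun_eq_iff)

lemma approx_Uinv_err_blk:
  assumes y: "\<And>l. y l \<noteq> 0 \<Longrightarrow> blk_of l = J"
  shows "mv Uinv y i - mv (approx_Uinv k) y i = (richardson (n (Suc J)) ^^ k) (mv Uinv y) i"
  using Uinv_blk_split[OF y, where i=i and k=k] approx_Uinv_blk[OF y, where k=k] by simp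

lemma neumann_far_from_blk:
  assumes y: "\<And>l. y l \<noteq> 0 \<Longrightarrow> blk_of l = J"
    and i: "i \<in> blk n I" and far: "I + (m - 1) * b0 < J"
  shows "neumann (n (Suc J)) m y i = 0"
proof (rule ccontr)
  assume "neumann (n (Suc J)) m y i \<noteq> 0"
  from neumann_nonzero[OF this] obtain j where "y j \<noteq> 0" "blk_of j \<le> blk_of i + (m - 1) * b0"
    by blast
  then have "J \<le> I + (m - 1) * b0" using y i mem_blk_iff by force
  then show False using far by simp
qed

lemma approx_Uinv_err_blk_le_pow:
  assumes y: "\<And>l. y l \<noteq> 0 \<Longrightarrow> blk_of l = J"
    and m: "k \<le> m" "m = k \<or> I + (m - 1) * b0 < J"
  shows "L2_set (\<lambda>i. mv Uinv y i - mv (approx_Uinv k) y i) (blk n I)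
    \<le> q ^ m * (normUinv * l2norm y)"
proof -
  let ?N = "n (Suc J)"
  define v where "v = mv Uinv y"
  have yf: "supp_lt ?N y" by (rule supp_lt_of_blk[OF y])
  have vf: "supp_lt ?N v" unfolding v_def by (rule M_Uinv_blk(1)[OF y])
  have vn: "l2norm v \<le> normUinv * l2norm y"
    unfolding v_def using Uinv_norm[OF l2_supp_lt[OF yf]] by simp
  \<comment> \<open>Far from block J the truncated Neumann series has not reached y yet, so there the
    residual after k steps equals the (smaller) residual after m steps.\<close>
  have "L2_set (\<lambda>i. mv Uinv y i - mv (approx_Uinv k) y i) (blk n I)
      = L2_set ((richardson ?N ^^ m) v) (blk n I)"
  proof (rule L2_set_cong)
    fix i assume i: "i \<in> blk n I"
    show "mv Uinv y i - mv (approx_Uinv k) y i = (richardson ?N ^^ m) v i"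
    proof (cases "m = k")
      case False
      then have far_m: "I + (m - 1) * b0 < J" using m(2) by simp
      moreover have "(k - 1) * b0 \<le> (m - 1) * b0" using m(1) by (intro mult_right_mono) auto
      ultimately have far: "I + (m - 1) * b0 < J" "I + (k - 1) * b0 < J" by linarith+
      show ?thesis
        using approx_Uinv_err_blk[OF y, where i=i and k=k]
          Uinv_blk_split[OF y, where i=i and k=k] Uinv_blk_split[OF y, where i=i and k=m]
          neumann_far_from_blk[OF y i far(1)] neumann_far_from_blk[OF y i far(2)]
        by (simp add: v_def)
    qed (simp add: approx_Uinv_err_blk[OF y] v_def)
  qed simp
  also have "\<dots> \<le> l2norm ((richardson ?N ^^ m) v)"
    by (rule L2_set_blk_le_l2norm[OF supp_lt_richardson_pow[OF vf]])
  also have "\<dots> \<le> q ^ m * l2norm v" by (rule richardson_pow_contr[OF vf])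
  also have "\<dots> \<le> q ^ m * (normUinv * l2norm y)" using vn q_props(1)
    by (simp add: mult_left_mono)
  finally show ?thesis .
qed

definition err_Uinv_decay :: "nat \<Rightarrow> nat \<Rightarrow> real" where
  "err_Uinv_decay k t = normUinv * r ^ k * r ^ (t div b0)"

definition err_Uinv :: "nat \<Rightarrow> real" where
  "err_Uinv k = normUinv * r ^ k * (real b0 / (1 - r))"

lemma err_Uinv_decay_nonneg: "0 \<le> err_Uinv_decay k t"
  using normUinv_nonneg r_props by (simp add: err_Uinv_decay_def)

lemma err_Uinv_nonneg: "0 \<le> err_Uinv k"
  using normUinv_nonneg r_props by (simp add: err_Uinv_def)

lemma sum_err_Uinv_decay_le: "(\<Sum>t<T. err_Uinv_decay k t) \<le> err_Uinv k"
proof -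
  have "(\<Sum>t<T. r ^ (t div b0)) \<le> (\<Sum>t<b0 * T. r ^ (t div b0))"
    by (rule sum_mono2) (use b0_ge1 r_props in auto)
  also have "\<dots> = real b0 * (\<Sum>j<T. r ^ j)" by (rule sum_lessThan_mult_div)
  also have "\<dots> = real b0 * ((1 - r ^ T) / (1 - r))" using r_props by (simp add: sum_gp_strict)
  also have "\<dots> \<le> real b0 * (1 / (1 - r))" using r_props
    by (intro mult_left_mono divide_right_mono) auto
  finally have "(\<Sum>t<T. r ^ (t div b0)) \<le> real b0 / (1 - r)" by simp
  then have "normUinv * r ^ k * (\<Sum>t<T. r ^ (t div b0)) \<le> err_Uinv k"
    unfolding err_Uinv_def using normUinv_nonneg r_props by (intro mult_left_mono) auto
  then show ?thesis by (simp add: err_Uinv_decay_def sum_distrib_left)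
qed

lemma approx_Uinv_err_blk_bound:
  assumes y: "\<And>l. y l \<noteq> 0 \<Longrightarrow> blk_of l = J" and IJ: "I \<le> J"
  shows "L2_set (\<lambda>i. mv Uinv y i - mv (approx_Uinv k) y i) (blk n I)
    \<le> err_Uinv_decay k (J - I) * l2norm y"
proof -
  define t where "t = J - I"
  obtain m where m: "k \<le> m" "m = k \<or> (m - 1) * b0 < t" "k + t div b0 \<le> 2 * m"
    using exists_steps_covering_gap[OF b0_pos] by blast
  then have "m = k \<or> I + (m - 1) * b0 < J" using IJ by (auto simp: t_def)
  then have "L2_set (\<lambda>i. mv Uinv y i - mv (approx_Uinv k) y i) (blk n I)
      \<le> r ^ (2 * m) * (normUinv * l2norm y)"
    using approx_Uinv_err_blk_le_pow[OF y m(1)] by (simp add: r_props(3) power_mult)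
  also have "\<dots> \<le> r ^ (k + t div b0) * (normUinv * l2norm y)"
    using normUinv_nonneg l2norm_nonneg[OF l2_supp_lt[OF supp_lt_of_blk[OF y]]]
    by (intro mult_right_mono power_decreasing[OF m(3)]) (simp_all add: r_props)
  finally show ?thesis by (simp add: err_Uinv_decay_def t_def power_add algebra_simps)
qed

lemma supp_lt_approx_Uinv: assumes y: "supp_lt (n K) y" shows "supp_lt (n K) (mv (approx_Uinv k) y)"
  unfolding supp_lt_def
proof (intro allI impI)
  fix i assume i: "n K \<le> i"
  have zz: "approx_Uinv k i l * y l = 0" if "l < n K" for l
  proof -
    have "blk_of l < K" using that less_n_iff by simp
    moreover have "\<not> blk_of i < K" using i less_n_iff[of i K] by simp
    ultimately have "approx_Uinv k i l = 0" using approx_Uinv_nonzero_near[of k i l] by fastforce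
    thus ?thesis by simp
  qed
  have "mv (approx_Uinv k) y i = (\<Sum>l<n K. approx_Uinv k i l * y l)" by (rule mv_supp_lt[OF y])
  also have "\<dots> = 0" by (rule sum.neutral) (simp add: zz)
  finally show "mv (approx_Uinv k) y i = 0" .
qed

lemma mv_sum_blk_proj:
  assumes y: "supp_lt (n Q) y"
  shows "mv T y = (\<lambda>i. \<Sum>J<Q. mv T (blk_proj J y) i)"
proof -
  have bpfs: "supp_lt (n Q) (blk_proj J y)" if "J \<in> {..<Q}" for J
    using supp_lt_blk_proj[of J y] n_mono[of "Suc J" Q] that by (auto intro: supp_lt_mono)
  have "mv T (\<lambda>i. \<Sum>J\<in>{..<Q}. blk_proj J y i) = (\<lambda>i. \<Sum>J\<in>{..<Q}. mv T (blk_proj J y) i)"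
    by (rule mv_sum[OF _ bpfs]) simp_all
  thus ?thesis unfolding sum_blk_proj[OF y, symmetric] .
qed

lemma approx_Uinv_err_blk_sum:
  assumes y: "supp_lt (n Q) y"
  shows "L2_set (\<lambda>i. mv Uinv y i - mv (approx_Uinv k) y i) (blk n I)
    \<le> (\<Sum>J<Q. (if I \<le> J then err_Uinv_decay k (J - I) else 0) * L2_set y (blk n J))"
proof -
  define w where "w J = (\<lambda>i. mv Uinv (blk_proj J y) i - mv (approx_Uinv k) (blk_proj J y) i)" for J
  have "(\<lambda>i. mv Uinv y i - mv (approx_Uinv k) y i) = (\<lambda>i. \<Sum>J<Q. w J i)"
    unfolding w_def mv_sum_blk_proj[OF y, of Uinv] mv_sum_blk_proj[OF y, of "approx_Uinv k"]
    by (simp add: sum_subtractf)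
  then have "L2_set (\<lambda>i. mv Uinv y i - mv (approx_Uinv k) y i) (blk n I)
      \<le> (\<Sum>J<Q. L2_set (w J) (blk n I))"
    by (simp add: L2_set_sum_le)
  also have "\<dots> \<le> (\<Sum>J<Q. (if I \<le> J then err_Uinv_decay k (J - I) else 0) * L2_set y (blk n J))"
  proof (rule sum_mono)
    fix J
    show "L2_set (w J) (blk n I) \<le> (if I \<le> J then err_Uinv_decay k (J - I) else 0) * L2_set y (blk n J)"
    proof (cases "I \<le> J")
      case True
      have "L2_set (w J) (blk n I) \<le> err_Uinv_decay k (J - I) * l2norm (blk_proj J y)"
        unfolding w_def by (rule approx_Uinv_err_blk_bound[OF blk_proj_nonzero True])
      then show ?thesis using True by (simp add: l2norm_blk_proj)
    next
      case False
      \<comment> \<open>U^-1 is block-upper triangular, so w J vanishes on blocks below J.\<close>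
      have "w J = (richardson (n (Suc J)) ^^ k) (mv Uinv (blk_proj J y))"
        unfolding w_def by (rule ext) (rule approx_Uinv_err_blk[OF blk_proj_nonzero])
      then have "supp_lt (n (Suc J)) (w J)"
        using supp_lt_richardson_pow[OF M_Uinv_blk(1)[OF blk_proj_nonzero]] by simp
      moreover have "\<not> i < n (Suc J)" if "i \<in> blk n I" for i
        using that False by (simp add: mem_blk_iff less_n_iff)
      ultimately have "w J i = 0" if "i \<in> blk n I" for i
        using that by (simp add: supp_lt_def not_less)
      then show ?thesis using False by (simp add: L2_set_0')
    qed
  qed
  finally show ?thesis .
qed

lemma approx_Uinv_err_supp_lt:
  assumes y: "supp_lt (n Q) y"
  shows "l2norm (\<lambda>i. mv Uinv y i - mv (approx_Uinv k) y i) \<le> err_Uinv k * l2norm y"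
proof -
  define e where "e = (\<lambda>i. mv Uinv y i - mv (approx_Uinv k) y i)"
  have "supp_lt (n Q) e"
    unfolding e_def by (rule supp_lt_diff[OF Uinv_supp_lt[OF y] supp_lt_approx_Uinv[OF y]])
  then have "(l2norm e)\<^sup>2 = (\<Sum>I<Q. (L2_set e (blk n I))\<^sup>2)"
    by (rule l2norm_power2_blocks)
  also have "\<dots> \<le> (err_Uinv k)\<^sup>2 * (\<Sum>J<Q. (L2_set y (blk n J))\<^sup>2)"
    using approx_Uinv_err_blk_sum[OF y] err_Uinv_decay_nonneg sum_err_Uinv_decay_le
    by (intro schur_test_toeplitz) (simp_all add: e_def)
  also have "\<dots> = (err_Uinv k * l2norm y)\<^sup>2"
    using l2norm_power2_blocks[OF y] by (simp add: power_mult_distrib)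
  finally show ?thesis unfolding e_def[symmetric]
    by (rule power2_le_imp_le) (use err_Uinv_nonneg l2norm_nonneg[OF l2_supp_lt[OF y]] in auto)
qed

lemma err_Uinv_summable: "l2 x \<Longrightarrow> summable (\<lambda>j. mdiff Uinv (approx_Uinv k) i j * x j)"
proof -
  assume x: "l2 x"
  have "summable (\<lambda>j. Uinv i j * x j - approx_Uinv k i j * x j)"
    by (rule summable_diff[OF bounded_l2_summable[OF Uinv_bounded x] approx_Uinv_summable])
  thus ?thesis by (simp add: mdiff_def algebra_simps)
qed

lemma mv_err_Uinv_supp_lt:
  assumes y: "supp_lt N y"
  shows "mv (mdiff Uinv (approx_Uinv k)) y = (\<lambda>i. mv Uinv y i - mv (approx_Uinv k) y i)"
  by (rule mv_mdiff) (simp_all add: summable_row_supp_lt[OF y])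

lemma err_Uinv_bound:
  assumes x: "l2 x"
  shows "l2 (mv (mdiff Uinv (approx_Uinv k)) x) \<and> l2norm (mv (mdiff Uinv (approx_Uinv k)) x) \<le> err_Uinv k * l2norm x"
proof (rule l2_bound_from_trunc[OF x err_Uinv_summable[OF x]])
  fix N
  have yf: "supp_lt (n N) (trunc N x)" using supp_lt_trunc[of N x] le_n[of N] by (rule supp_lt_mono)
  have fs2: "supp_lt (n N) (\<lambda>i. mv Uinv (trunc N x) i - mv (approx_Uinv k) (trunc N x) i)"
    by (rule supp_lt_diff[OF Uinv_supp_lt[OF yf] supp_lt_approx_Uinv[OF yf]])
  have "l2norm (mv (mdiff Uinv (approx_Uinv k)) (trunc N x)) \<le> err_Uinv k * l2norm (trunc N x)"
    unfolding mv_err_Uinv_supp_lt[OF yf] by (rule approx_Uinv_err_supp_lt[OF yf])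
  also have "\<dots> \<le> err_Uinv k * l2norm x"
    by (rule mult_left_mono[OF l2norm_trunc_le[OF x] err_Uinv_nonneg])
  finally show "l2 (mv (mdiff Uinv (approx_Uinv k)) (trunc N x)) \<and>
      l2norm (mv (mdiff Uinv (approx_Uinv k)) (trunc N x)) \<le> err_Uinv k * l2norm x"
    unfolding mv_err_Uinv_supp_lt[OF yf] using l2_supp_lt[OF fs2]
      by (simp add: mv_err_Uinv_supp_lt[OF yf])
qed

lemma approx_Uinv_bound:
  assumes x: "l2 x"
  shows "l2 (mv (approx_Uinv k) x) \<and> l2norm (mv (approx_Uinv k) x) \<le> (normUinv + err_Uinv k) * l2norm x"
proof (rule l2_bound_from_trunc[OF x approx_Uinv_summable])
  fix N
  define y where "y = trunc N x"
  have yf: "supp_lt (n N) y" using supp_lt_trunc[of N x] le_n[of N] unfolding y_def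
    by (rule supp_lt_mono)
  have l2y: "l2 y" by (rule l2_supp_lt[OF yf])
  have ufs: "supp_lt (n N) (mv Uinv y)" by (rule Uinv_supp_lt[OF yf])
  have efs: "supp_lt (n N) (\<lambda>i. mv Uinv y i - mv (approx_Uinv k) y i)"
    by (rule supp_lt_diff[OF ufs supp_lt_approx_Uinv[OF yf]])
  have eq: "mv (approx_Uinv k) y = (\<lambda>i. mv Uinv y i - (mv Uinv y i - mv (approx_Uinv k) y i))" by simp
  have "l2norm (mv (approx_Uinv k) y) \<le> l2norm (mv Uinv y) + l2norm (\<lambda>i. mv Uinv y i - mv (approx_Uinv k) y i)"
    by (subst eq, rule l2norm_diff_le_supp_lt[OF ufs efs])
  also have "\<dots> \<le> normUinv * l2norm y + err_Uinv k * l2norm y"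
    using Uinv_norm[OF l2y] approx_Uinv_err_supp_lt[OF yf, of k] by simp
  also have "\<dots> = (normUinv + err_Uinv k) * l2norm y" by (simp add: distrib_right)
  also have "\<dots> \<le> (normUinv + err_Uinv k) * l2norm x" unfolding y_def
    using normUinv_nonneg err_Uinv_nonneg by (intro mult_left_mono l2norm_trunc_le[OF x]) auto
  finally show "l2 (mv (approx_Uinv k) (trunc N x)) \<and> l2norm (mv (approx_Uinv k) (trunc N x)) \<le> (normUinv + err_Uinv k) * l2norm x"
    using l2_supp_lt[OF supp_lt_approx_Uinv[OF yf]] by (simp add: y_def)
qed

lemma approx_Uinv_bounded: "bounded_l2 (approx_Uinv k)"
  by (rule bounded_l2I[OF approx_Uinv_bound approx_Uinv_summable])

lemma approx_Uinv_opnorm: "opnorm2 (approx_Uinv k) \<le> normUinv + err_Uinv k"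
  by (rule opnorm2_le) (use normUinv_nonneg err_Uinv_nonneg approx_Uinv_bound in auto)

lemma err_Uinv_opnorm: "opnorm2 (mdiff Uinv (approx_Uinv k)) \<le> err_Uinv k"
  by (rule opnorm2_le) (use err_Uinv_nonneg err_Uinv_bound in auto)

lemma approx_Uinv_lower:
  assumes small: "normU * err_Uinv k \<le> 1/2" and x: "supp_lt N x"
  shows "l2norm x \<le> 2 * normU * l2norm (mv (approx_Uinv k) x)"
proof -
  have xf: "supp_lt (n N) x" using x le_n[of N] by (rule supp_lt_mono)
  define u where "u = mv Uinv x"
  have ufs: "supp_lt (n N) u" unfolding u_def by (rule Uinv_supp_lt[OF xf])
  have vfs: "supp_lt (n N) (mv (approx_Uinv k) x)" by (rule supp_lt_approx_Uinv[OF xf])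
  have "x = mv U u" unfolding u_def using U_Uinv(1)[OF l2_supp_lt[OF xf]] by simp
  hence "l2norm x \<le> normU * l2norm u" using U_norm[OF l2_supp_lt[OF ufs]] by simp
  also have "l2norm u \<le> l2norm (mv (approx_Uinv k) x) + l2norm (\<lambda>i. u i - mv (approx_Uinv k) x i)"
    by (rule l2norm_le_add_diff_supp_lt[OF ufs vfs])
  also have "l2norm (\<lambda>i. u i - mv (approx_Uinv k) x i) \<le> err_Uinv k * l2norm x"
    unfolding u_def by (rule approx_Uinv_err_supp_lt[OF xf])
  finally have "l2norm x \<le> normU * (l2norm (mv (approx_Uinv k) x) + err_Uinv k * l2norm x)"
    using normU_pos by (simp add: mult_left_mono)
  hence "l2norm x \<le> normU * l2norm (mv (approx_Uinv k) x) + (normU * err_Uinv k) * l2norm x"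
    by (simp add: algebra_simps)
  moreover have "(normU * err_Uinv k) * l2norm x \<le> 1/2 * l2norm x"
    by (rule mult_right_mono[OF small l2norm_nonneg[OF l2_supp_lt[OF xf]]])
  ultimately show ?thesis by linarith
qed

lemma approx_Uinv_inj:
  assumes small: "normU * err_Uinv k \<le> 1/2" and x: "l2 x" and z: "mv (approx_Uinv k) x = (\<lambda>i. 0)"
  shows "x = (\<lambda>i. 0)"
proof -
  have "mv (mdiff Uinv (approx_Uinv k)) x = (\<lambda>i. mv Uinv x i - mv (approx_Uinv k) x i)"
    by (rule mv_mdiff[OF bounded_l2_summable[OF Uinv_bounded x] approx_Uinv_summable])
  hence Ex: "mv (mdiff Uinv (approx_Uinv k)) x = mv Uinv x" using z by simp
  have "l2norm x = l2norm (mv U (mv Uinv x))" using U_Uinv(1)[OF x] by simp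
  also have "\<dots> \<le> normU * l2norm (mv Uinv x)" using U_norm Uinv_norm[OF x] by blast
  also have "\<dots> \<le> normU * (err_Uinv k * l2norm x)"
    using err_Uinv_bound[OF x, of k] Ex normU_pos by (simp add: mult_left_mono)
  also have "\<dots> \<le> 1/2 * l2norm x"
    using mult_right_mono[OF small l2norm_nonneg[OF x]] by (simp add: mult.assoc)
  finally have "l2norm x = 0" using l2norm_nonneg[OF x] by simp
  thus ?thesis using l2norm_eq_0_imp_zero[OF x] by auto
qed

text \<open>The inverse of approx_Uinv k is built column by column: approx_Uinv k is block-upper
  triangular and, for small error, injective on each finite section.\<close>

definition approx_U_col :: "nat \<Rightarrow> nat \<Rightarrow> ivec" where
  "approx_U_col k l = (SOME x. supp_lt (n (Suc (blk_of l))) x \<and> mv (approx_Uinv k) x = unit_vec l)"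

definition approx_U :: "nat \<Rightarrow> imat" where "approx_U k i l = approx_U_col k l i"

lemma approx_U_col_props:
  assumes small: "normU * err_Uinv k \<le> 1/2"
  shows "supp_lt (n (Suc (blk_of l))) (approx_U_col k l) \<and> mv (approx_Uinv k) (approx_U_col k l) = unit_vec l"
proof -
  let ?N = "n (Suc (blk_of l))"
  have inj: "\<forall>i<?N. x i = 0" if xf: "supp_lt ?N x" and h: "\<forall>i<?N. (\<Sum>j<?N. approx_Uinv k i j * x j) = 0" for x
  proof -
    have z: "mv (approx_Uinv k) x = (\<lambda>i. 0)"
    proof (rule ext)
      fix i show "mv (approx_Uinv k) x i = 0"
      proof (cases "i < ?N")
        case True thus ?thesis using h mv_supp_lt[OF xf, of "approx_Uinv k" i] by simp
      next
        case False thus ?thesis using supp_lt_approx_Uinv[OF xf, of k] by (simp add: supp_lt_def)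
      qed
    qed
    have "l2norm x \<le> 2 * normU * l2norm (mv (approx_Uinv k) x)"
      by (rule approx_Uinv_lower[OF small xf])
    hence "l2norm x \<le> 0" unfolding z by (simp add: l2norm_def)
    hence "l2norm x = 0" using l2norm_nonneg[OF l2_supp_lt[OF xf]] by simp
    thus ?thesis using l2norm_eq_0_imp_zero[OF l2_supp_lt[OF xf]] by auto
  qed
  obtain x where x: "supp_lt ?N x" "\<forall>i<?N. (\<Sum>j<?N. approx_Uinv k i j * x j) = unit_vec l i"
    using finite_system_solvable[of ?N "approx_Uinv k" "unit_vec l"] inj by blast
  have "mv (approx_Uinv k) x = unit_vec l"
  proof (rule ext)
    fix i show "mv (approx_Uinv k) x i = unit_vec l i"
    proof (cases "i < ?N")
      case True thus ?thesis using x mv_supp_lt[OF x(1), of "approx_Uinv k" i] by simp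
    next
      case False
      moreover have "l < ?N" using less_n_iff by simp
      ultimately have "unit_vec l i = 0" by (auto simp: unit_vec_def)
      thus ?thesis using supp_lt_approx_Uinv[OF x(1), of k] False by (simp add: supp_lt_def)
    qed
  qed
  hence ex: "\<exists>x. supp_lt ?N x \<and> mv (approx_Uinv k) x = unit_vec l" using x(1) by blast
  show ?thesis unfolding approx_U_col_def by (rule someI_ex[OF ex])
qed

lemma approx_U_supp_lt_right_inverse:
  assumes small: "normU * err_Uinv k \<le> 1/2" and y: "supp_lt (n Q) y"
  shows "supp_lt (n Q) (mv (approx_U k) y)" and "mv (approx_Uinv k) (mv (approx_U k) y) = y"
proof -
  have m: "mv (approx_U k) y = (\<lambda>i. \<Sum>l<n Q. y l * approx_U_col k l i)"
    by (rule ext) (simp add: mv_supp_lt[OF y] approx_U_def mult.commute)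
  have cfs: "supp_lt (n Q) (\<lambda>i. y l * approx_U_col k l i)" if "l \<in> {..<n Q}" for l
  proof (cases "y l = 0")
    case True thus ?thesis by (simp add: supp_lt_def)
  next
    case False
    have "l < n Q" using that by simp
    hence "Suc (blk_of l) \<le> Q" using less_n_iff by simp
    hence "supp_lt (n Q) (approx_U_col k l)" using approx_U_col_props[OF small, of l] n_mono
      by (blast intro: supp_lt_mono)
    thus ?thesis by (simp add: supp_lt_def)
  qed
  show "supp_lt (n Q) (mv (approx_U k) y)" unfolding m using cfs
    by (auto simp: supp_lt_def intro!: sum.neutral)
  have "mv (approx_Uinv k) (mv (approx_U k) y) = (\<lambda>i. \<Sum>l<n Q. mv (approx_Uinv k) (\<lambda>i. y l * approx_U_col k l i) i)"
    unfolding m by (rule mv_sum[OF _ cfs]) simp_all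
  also have "\<dots> = (\<lambda>i. \<Sum>l<n Q. y l * unit_vec l i)"
  proof (rule ext, rule sum.cong)
    fix i l assume "l \<in> {..<n Q}"
    have "supp_lt (n (Suc (blk_of l))) (approx_U_col k l)" using approx_U_col_props[OF small] by blast
    hence "mv (approx_Uinv k) (\<lambda>i. y l * approx_U_col k l i) = (\<lambda>i. y l * mv (approx_Uinv k) (approx_U_col k l) i)" by (rule mv_scale_supp_lt)
    thus "mv (approx_Uinv k) (\<lambda>i. y l * approx_U_col k l i) i = y l * unit_vec l i"
      using approx_U_col_props[OF small, of l] by simp
  qed simp
  also have "\<dots> = y" by (rule sum_unit_vec[OF y, symmetric])
  finally show "mv (approx_Uinv k) (mv (approx_U k) y) = y" .
qed

lemma approx_U_bound_supp_lt:
  assumes small: "normU * err_Uinv k \<le> 1/2" and y: "supp_lt (n Q) y"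
  shows "l2norm (mv (approx_U k) y) \<le> 2 * normU * l2norm y"
  using approx_Uinv_lower[OF small approx_U_supp_lt_right_inverse(1)[OF small y]] approx_U_supp_lt_right_inverse(2)[OF small y]
    by simp

lemma l2_approx_U_row:
  assumes small: "normU * err_Uinv k \<le> 1/2"
  shows "l2 (\<lambda>l. approx_U k i l)"
proof -
  have part: "(\<Sum>l<P. (approx_U k i l)\<^sup>2) \<le> (2 * normU)\<^sup>2" for P
  proof -
    define y where "y = trunc P (\<lambda>l. approx_U k i l)"
    define s where "s = (\<Sum>l<P. (approx_U k i l)\<^sup>2)"
    have yP: "supp_lt P y" by (simp add: y_def)
    have yf: "supp_lt (n P) y" using yP le_n[of P] by (rule supp_lt_mono)
    have s0: "0 \<le> s" by (simp add: s_def sum_nonneg)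
    have "mv (approx_U k) y i = (\<Sum>l<P. approx_U k i l * y l)" by (rule mv_supp_lt[OF yP])
    also have "\<dots> = s" by (simp add: s_def y_def trunc_def power2_eq_square)
    finally have e1: "mv (approx_U k) y i = s" .
    have "l2norm y = L2_set y {..<P}" by (rule l2norm_supp_lt[OF yP])
    also have "\<dots> = sqrt s" by (simp add: L2_set_def s_def y_def trunc_def)
    finally have ny: "l2norm y = sqrt s" .
    have "s \<le> \<bar>mv (approx_U k) y i\<bar>" using e1 by simp
    also have "\<dots> \<le> l2norm (mv (approx_U k) y)"
      by (rule abs_le_l2norm[OF approx_U_supp_lt_right_inverse(1)[OF small yf]])
    also have "\<dots> \<le> 2 * normU * sqrt s" using approx_U_bound_supp_lt[OF small yf] ny
      by simp
    finally have ss: "s \<le> 2 * normU * sqrt s" .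
    have "sqrt s \<le> 2 * normU"
    proof (cases "s = 0")
      case True thus ?thesis using normU_pos by simp
    next
      case False
      hence sp: "0 < sqrt s" using s0 by simp
      have "sqrt s * sqrt s \<le> (2 * normU) * sqrt s" using ss s0 by simp
      thus ?thesis using sp by (rule mult_right_le_imp_le)
    qed
    hence "(sqrt s)\<^sup>2 \<le> (2 * normU)\<^sup>2" by (rule power_mono) (simp add: s0)
    thus ?thesis using s0 by (simp add: s_def)
  qed
  show ?thesis unfolding l2_def by (rule summableI_nonneg_bounded[OF _ part]) simp
qed

lemma approx_U_summable:
  assumes small: "normU * err_Uinv k \<le> 1/2" and x: "l2 x"
  shows "summable (\<lambda>l. approx_U k i l * x l)"
  by (rule summable_l2_mult[OF l2_approx_U_row[OF small] x])

lemma approx_U_bound: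
  assumes small: "normU * err_Uinv k \<le> 1/2" and x: "l2 x"
  shows "l2 (mv (approx_U k) x) \<and> l2norm (mv (approx_U k) x) \<le> 2 * normU * l2norm x"
proof (rule l2_bound_from_trunc[OF x approx_U_summable[OF small x]])
  fix N
  have yf: "supp_lt (n N) (trunc N x)" using supp_lt_trunc[of N x] le_n[of N] by (rule supp_lt_mono)
  have "l2norm (mv (approx_U k) (trunc N x)) \<le> 2 * normU * l2norm (trunc N x)"
    by (rule approx_U_bound_supp_lt[OF small yf])
  also have "\<dots> \<le> 2 * normU * l2norm x" using normU_pos
    by (intro mult_left_mono l2norm_trunc_le[OF x]) auto
  finally show "l2 (mv (approx_U k) (trunc N x)) \<and> l2norm (mv (approx_U k) (trunc N x)) \<le> 2 * normU * l2norm x"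
    using l2_supp_lt[OF approx_U_supp_lt_right_inverse(1)[OF small yf]] by simp
qed

lemma approx_U_bounded:
  assumes small: "normU * err_Uinv k \<le> 1/2"
  shows "bounded_l2 (approx_U k)"
  by (rule bounded_l2I[OF approx_U_bound[OF small] approx_U_summable[OF small]])

lemma approx_U_opnorm:
  assumes small: "normU * err_Uinv k \<le> 1/2"
  shows "opnorm2 (approx_U k) \<le> 2 * normU"
  by (rule opnorm2_le) (use normU_pos approx_U_bound[OF small] in auto)

lemma approx_Uinv_approx_U:
  assumes small: "normU * err_Uinv k \<le> 1/2" and x: "l2 x"
  shows "mv (approx_Uinv k) (mv (approx_U k) x) = x"
proof (rule ext)
  fix i
  let ?R = "{..<approx_Uinv_row_end k i}"
  have "mv (approx_Uinv k) (mv (approx_U k) x) i = (\<Sum>l\<in>?R. approx_Uinv k i l * mv (approx_U k) x l)" by (rule mv_approx_Uinv)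
  also have "\<dots> = (\<Sum>l\<in>?R. \<Sum>j. approx_Uinv k i l * (approx_U k l j * x j))"
    unfolding mv_def by (rule sum.cong[OF refl], rule suminf_mult[symmetric], rule approx_U_summable[OF small x])
  also have "\<dots> = (\<Sum>j. \<Sum>l\<in>?R. approx_Uinv k i l * (approx_U k l j * x j))"
    by (rule suminf_sum[symmetric]) (rule summable_mult, rule approx_U_summable[OF small x])
  also have "\<dots> = (\<Sum>j. (if j = i then x j else 0))"
  proof (rule arg_cong[where f=suminf], rule ext)
    fix j
    have "(\<Sum>l\<in>?R. approx_Uinv k i l * (approx_U k l j * x j)) = (\<Sum>l\<in>?R. approx_Uinv k i l * approx_U_col k j l) * x j"
      by (simp add: sum_distrib_right approx_U_def mult.assoc)
    also have "(\<Sum>l\<in>?R. approx_Uinv k i l * approx_U_col k j l) = mv (approx_Uinv k) (approx_U_col k j) i" by (rule mv_approx_Uinv[symmetric])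
    also have "\<dots> = unit_vec j i" using approx_U_col_props[OF small, of j] by simp
    finally show "(\<Sum>l\<in>?R. approx_Uinv k i l * (approx_U k l j * x j)) = (if j = i then x j else 0)"
      by (simp add: unit_vec_def)
  qed
  also have "\<dots> = x i" using sums_single[of i x] by (simp add: sums_iff)
  finally show "mv (approx_Uinv k) (mv (approx_U k) x) i = x i" .
qed

lemma approx_U_approx_Uinv:
  assumes small: "normU * err_Uinv k \<le> 1/2" and x: "l2 x"
  shows "mv (approx_U k) (mv (approx_Uinv k) x) = x"
proof -
  define v where "v = mv (approx_U k) (mv (approx_Uinv k) x)"
  have l2vx: "l2 (mv (approx_Uinv k) x)" using approx_Uinv_bound[OF x] by blast
  have l2v: "l2 v" unfolding v_def using approx_U_bound[OF small l2vx] by blast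
  have "mv (approx_Uinv k) v = mv (approx_Uinv k) x" unfolding v_def
    by (rule approx_Uinv_approx_U[OF small l2vx])
  moreover have "mv (approx_Uinv k) (\<lambda>i. v i - x i) = (\<lambda>i. mv (approx_Uinv k) v i - mv (approx_Uinv k) x i)"
    by (rule mv_diff) (rule approx_Uinv_summable)+
  ultimately have "mv (approx_Uinv k) (\<lambda>i. v i - x i) = (\<lambda>i. 0)" by simp
  hence "(\<lambda>i. v i - x i) = (\<lambda>i. 0)"
    by (rule approx_Uinv_inj[OF small l2_diff[OF l2v x]])
  hence "v = x" by (simp add: fun_eq_iff)
  thus ?thesis by (simp add: v_def)
qed

lemma approx_Uinv_inverse:
  assumes small: "normU * err_Uinv k \<le> 1/2"
  shows "is_bounded_inverse (approx_Uinv k) (approx_U k)"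
  unfolding is_bounded_inverse_def
  using approx_Uinv_bounded approx_U_bounded[OF small] approx_Uinv_approx_U[OF small] approx_U_approx_Uinv[OF small] by blast

abbreviation "DU \<equiv> blk_diag_part n U"

lemma DU_entry: "DU i l = (if blk_of i = blk_of l then U i l else 0)"
proof -
  have "(\<exists>I. i \<in> blk n I \<and> l \<in> blk n I) \<longleftrightarrow> blk_of i = blk_of l" by (auto simp: mem_blk_iff)
  thus ?thesis by (simp add: blk_diag_part_def)
qed

definition schur_vec :: "nat \<Rightarrow> nat \<Rightarrow> ivec \<Rightarrow> ivec" where
  "schur_vec k J y = (\<lambda>i. y i - neumann (n J) k (trunc (n J) (mv M y)) i)"

definition approx_D :: "nat \<Rightarrow> imat" where
  "approx_D k i l = (if blk_of i = blk_of l then mv M (schur_vec k (blk_of l) (unit_vec l)) i else 0)"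

definition err_D :: "nat \<Rightarrow> real" where "err_D k = normM * q ^ k * normUinv * normU"

lemma err_D_nonneg: "0 \<le> err_D k"
  using normM_nonneg q_props normUinv_nonneg normU_pos by (simp add: err_D_def)

lemma supp_lt_schur_vec: "supp_lt (n (Suc J)) y \<Longrightarrow> supp_lt (n (Suc J)) (schur_vec k J y)"
proof -
  assume y: "supp_lt (n (Suc J)) y"
  have "supp_lt (n J) (neumann (n J) k (trunc (n J) (mv M y)))"
    by (rule supp_lt_neumann[OF supp_lt_trunc])
  hence "supp_lt (n (Suc J)) (neumann (n J) k (trunc (n J) (mv M y)))" using n_le_Suc
    by (rule supp_lt_mono)
  thus ?thesis using y by (simp add: schur_vec_def supp_lt_def)
qed

lemma schur_vec_sum_unit_vec:
  assumes y: "supp_lt (n (Suc J)) y"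
  shows "schur_vec k J y = (\<lambda>i. \<Sum>l<n (Suc J). y l * schur_vec k J (unit_vec l) i)"
proof -
  let ?N = "n (Suc J)" and ?N' = "n J"
  have r: "trunc ?N' (mv M y) = (\<lambda>i. \<Sum>l<?N. y l * trunc ?N' (mv M (unit_vec l)) i)"
    using mv_sum_unit_vec[OF y, of M] by (simp add: trunc_def fun_eq_iff sum_distrib_left)
  have "neumann ?N' k (trunc ?N' (mv M y)) = neumann ?N' k (\<lambda>i. \<Sum>l\<in>{..<?N}. (\<lambda>i. y l * trunc ?N' (mv M (unit_vec l)) i) i)"
    unfolding r by simp
  also have "\<dots> = (\<lambda>i. \<Sum>l\<in>{..<?N}. neumann ?N' k (\<lambda>i. y l * trunc ?N' (mv M (unit_vec l)) i) i)"
    by (rule seq_linear_sum[OF seq_linear_neumann]) simp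
  also have "\<dots> = (\<lambda>i. \<Sum>l<?N. y l * neumann ?N' k (trunc ?N' (mv M (unit_vec l))) i)"
    by (simp add: seq_linear_scale[OF seq_linear_neumann])
  finally have z: "neumann ?N' k (trunc ?N' (mv M y)) = (\<lambda>i. \<Sum>l<?N. y l * neumann ?N' k (trunc ?N' (mv M (unit_vec l))) i)" .
  have blocks: "(\<Sum>l<?N. y l * unit_vec l i) = y i" for i using sum_unit_vec[OF y] by metis
  show ?thesis
    unfolding schur_vec_def z by (simp add: fun_eq_iff right_diff_distrib sum_subtractf blocks)
qed

lemma mv_M_schur_vec_sum:
  assumes y: "supp_lt (n (Suc J)) y"
  shows "mv M (schur_vec k J y) = (\<lambda>i. \<Sum>l<n (Suc J). y l * mv M (schur_vec k J (unit_vec l)) i)"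
proof -
  let ?N = "n (Suc J)"
  have hf: "supp_lt ?N (schur_vec k J (unit_vec l))" if "l \<in> {..<?N}" for l
    using that by (intro supp_lt_schur_vec supp_lt_unit_vec) simp
  have "mv M (\<lambda>i. \<Sum>l\<in>{..<?N}. y l * schur_vec k J (unit_vec l) i) = (\<lambda>i. \<Sum>l\<in>{..<?N}. mv M (\<lambda>i. y l * schur_vec k J (unit_vec l) i) i)"
    by (rule mv_sum[where N="?N"]) (use hf in \<open>auto simp: supp_lt_def\<close>)
  also have "\<dots> = (\<lambda>i. \<Sum>l<?N. y l * mv M (schur_vec k J (unit_vec l)) i)"
    by (rule ext, rule sum.cong[OF refl]) (simp add: mv_scale_supp_lt[OF hf])
  finally show ?thesis using schur_vec_sum_unit_vec[OF y, of k] by simp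
qed

lemma approx_D_blk:
  assumes y: "\<And>l. y l \<noteq> 0 \<Longrightarrow> blk_of l = J"
  shows "mv (approx_D k) y = blk_proj J (mv M (schur_vec k J y))"
proof (rule ext)
  fix i
  let ?N = "n (Suc J)"
  have yf: "supp_lt ?N y" by (rule supp_lt_of_blk[OF y])
  have "mv (approx_D k) y i = (\<Sum>l<?N. approx_D k i l * y l)" by (rule mv_supp_lt[OF yf])
  also have "\<dots> = (\<Sum>l<?N. (if blk_of i = J then y l * mv M (schur_vec k J (unit_vec l)) i else 0))"
  proof (rule sum.cong[OF refl])
    fix l show "approx_D k i l * y l = (if blk_of i = J then y l * mv M (schur_vec k J (unit_vec l)) i else 0)"
      using y[of l] by (cases "y l = 0") (auto simp: approx_D_def)
  qed
  also have "\<dots> = blk_proj J (mv M (schur_vec k J y)) i"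
    using mv_M_schur_vec_sum[OF yf, of k] by (simp add: blk_proj_def)
  finally show "mv (approx_D k) y i = blk_proj J (mv M (schur_vec k J y)) i" .
qed

lemma mv_DU_blk:
  assumes y: "\<And>l. y l \<noteq> 0 \<Longrightarrow> blk_of l = J"
  shows "mv DU y = blk_proj J (mv U y)"
proof (rule ext)
  fix i
  let ?N = "n (Suc J)"
  have yf: "supp_lt ?N y" by (rule supp_lt_of_blk[OF y])
  have "mv DU y i = (\<Sum>l<?N. DU i l * y l)" by (rule mv_supp_lt[OF yf])
  also have "\<dots> = (\<Sum>l<?N. (if blk_of i = J then U i l * y l else 0))"
  proof (rule sum.cong[OF refl])
    fix l show "DU i l * y l = (if blk_of i = J then U i l * y l else 0)"
      using y[of l] by (cases "y l = 0") (auto simp: DU_entry)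
  qed
  also have "\<dots> = blk_proj J (mv U y) i" by (simp add: blk_proj_def mv_supp_lt[OF yf])
  finally show "mv DU y i = blk_proj J (mv U y) i" .
qed

text \<open>For y supported in block J, the vector schur_ext J y agrees with y on block J, is supported
  on the blocks up to J and is mapped by M to zero on the earlier blocks; hence M maps it to
  D(J,J) y on block J. The matrix approx_D is obtained by computing the correction with the
  truncated Neumann series for the leading section instead of U^-1.\<close>

definition schur_corr :: "nat \<Rightarrow> ivec \<Rightarrow> ivec" where
  "schur_corr J y = (\<lambda>i. - mv Uinv (trunc (n J) (mv U y)) i)"

definition schur_ext :: "nat \<Rightarrow> ivec \<Rightarrow> ivec" where
  "schur_ext J y = (\<lambda>i. y i + schur_corr J y i)"

lemma supp_lt_schur_corr: "supp_lt (n J) (schur_corr J y)"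
  using Uinv_supp_lt[OF supp_lt_trunc, of J "mv U y"] by (simp add: schur_corr_def supp_lt_def)

lemma supp_lt_schur_ext:
  assumes y: "\<And>l. y l \<noteq> 0 \<Longrightarrow> blk_of l = J"
  shows "supp_lt (n (Suc J)) (schur_ext J y)"
  using supp_lt_of_blk[OF y] supp_lt_mono[OF supp_lt_schur_corr n_le_Suc, of J y]
  by (simp add: schur_ext_def supp_lt_def)

lemma schur_ext_blk: "blk_of i = J \<Longrightarrow> schur_ext J y i = y i"
  using supp_lt_schur_corr[of J y] less_n_iff[of i J] by (simp add: schur_ext_def supp_lt_def)

lemma mv_U_schur_ext:
  assumes y: "\<And>l. y l \<noteq> 0 \<Longrightarrow> blk_of l = J"
  shows "mv U (schur_ext J y) = blk_proj J (mv U y)"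
proof (rule ext)
  fix i
  let ?u = "trunc (n J) (mv U y)"
  have yf: "supp_lt (n (Suc J)) y" by (rule supp_lt_of_blk[OF y])
  have cf: "supp_lt (n (Suc J)) (schur_corr J y)" using supp_lt_schur_corr n_le_Suc
    by (rule supp_lt_mono)
  have "mv U (schur_corr J y) = (\<lambda>i. (-1) * mv U (mv Uinv ?u) i)"
    using mv_scale_supp_lt[OF Uinv_supp_lt[OF supp_lt_trunc], of U "-1"]
      by (simp add: schur_corr_def)
  also have "\<dots> = (\<lambda>i. - ?u i)" using U_Uinv(1)[OF l2_supp_lt[OF supp_lt_trunc]]
    by simp
  finally have "mv U (schur_ext J y) i = mv U y i - ?u i"
    using mv_add_supp_lt[OF yf cf, of U] by (simp add: schur_ext_def)
  also have "\<dots> = blk_proj J (mv U y) i"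
    using U_supp_lt[OF yf] less_n_iff[of i J] less_n_iff[of i "Suc J"]
    by (auto simp: trunc_def blk_proj_def supp_lt_def)
  finally show "mv U (schur_ext J y) i = blk_proj J (mv U y) i" .
qed

lemma mv_M_schur_ext:
  assumes y: "\<And>l. y l \<noteq> 0 \<Longrightarrow> blk_of l = J" and i: "i < n (Suc J)"
  shows "mv M (schur_ext J y) i = blk_proj J (mv U y) i"
proof -
  have "schur_ext J y = mv Uinv (blk_proj J (mv U y))"
    using U_Uinv(2)[OF l2_supp_lt[OF supp_lt_schur_ext[OF y]]] mv_U_schur_ext[OF y] by simp
  then show ?thesis using M_Uinv_blk(2)[OF blk_proj_nonzero i] by simp
qed

lemma sect_schur_corr:
  assumes y: "\<And>l. y l \<noteq> 0 \<Longrightarrow> blk_of l = J"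
  shows "sect (n J) (schur_corr J y) = (\<lambda>i. - trunc (n J) (mv M y) i)"
proof (rule ext)
  fix i
  have "schur_corr J y = (\<lambda>i. schur_ext J y i - y i)" by (simp add: schur_ext_def)
  then have "mv M (schur_corr J y) = (\<lambda>i. mv M (schur_ext J y) i - mv M y i)"
    using mv_diff_supp_lt[OF supp_lt_schur_ext[OF y] supp_lt_of_blk[OF y], where T=M] by simp
  moreover have "mv M (schur_ext J y) i = 0" if "i < n J"
    using that mv_M_schur_ext[OF y, where i=i] n_le_Suc[of J] less_n_iff[of i J]
    by (simp add: blk_proj_def)
  ultimately show "sect (n J) (schur_corr J y) i = - trunc (n J) (mv M y) i"
    by (simp add: sect_supp_lt[OF supp_lt_schur_corr] trunc_def)
qed

lemma schur_vec_eq: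
  assumes y: "\<And>l. y l \<noteq> 0 \<Longrightarrow> blk_of l = J"
  shows "schur_vec k J y = (\<lambda>i. schur_ext J y i - (richardson (n J) ^^ k) (schur_corr J y) i)"
proof -
  have "neumann (n J) k (trunc (n J) (mv M y)) = neumann (n J) k (\<lambda>i. - sect (n J) (schur_corr J y) i)"
    using sect_schur_corr[OF y] by (simp add: fun_eq_iff)
  also have "\<dots> = (\<lambda>i. - neumann (n J) k (sect (n J) (schur_corr J y)) i)"
    by (rule seq_linear_neg[OF seq_linear_neumann])
  finally show ?thesis by (simp add: schur_vec_def schur_ext_def neumann_sect fun_eq_iff)
qed

definition schur_err :: "nat \<Rightarrow> nat \<Rightarrow> ivec \<Rightarrow> ivec" where
  "schur_err k J y = mv M ((richardson (n J) ^^ k) (schur_corr J y))"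

lemma mv_approx_D_blk:
  assumes y: "\<And>l. y l \<noteq> 0 \<Longrightarrow> blk_of l = J" and i: "blk_of i = J"
  shows "mv (approx_D k) y i = mv U y i - schur_err k J y i"
proof -
  have Rf: "supp_lt (n (Suc J)) ((richardson (n J) ^^ k) (schur_corr J y))"
    using supp_lt_richardson_pow[OF supp_lt_schur_corr] n_le_Suc by (rule supp_lt_mono)
  have "i < n (Suc J)" using i less_n_iff by simp
  then have "mv M (schur_ext J y) i = mv U y i"
    using mv_M_schur_ext[OF y] i by (simp add: blk_proj_def)
  then show ?thesis
    using approx_D_blk[OF y, where k=k] i schur_vec_eq[OF y, where k=k]
      mv_diff_supp_lt[OF supp_lt_schur_ext[OF y] Rf, where T=M]
    by (simp add: blk_proj_def schur_err_def)
qed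

lemma schur_err_bound:
  assumes y: "\<And>l. y l \<noteq> 0 \<Longrightarrow> blk_of l = J"
  shows "l2 (schur_err k J y) \<and> l2norm (schur_err k J y) \<le> err_D k * l2norm y"
proof -
  have l2y: "l2 y" by (rule l2_supp_lt[OF supp_lt_of_blk[OF y]])
  have Rf: "supp_lt (n J) ((richardson (n J) ^^ k) (schur_corr J y))"
    by (rule supp_lt_richardson_pow[OF supp_lt_schur_corr])
  have "l2norm (schur_corr J y) = l2norm (mv Uinv (trunc (n J) (mv U y)))"
    by (simp add: schur_corr_def l2norm_def)
  also have "\<dots> \<le> normUinv * l2norm (trunc (n J) (mv U y))"
    using Uinv_norm[OF l2_supp_lt[OF supp_lt_trunc]] by blast
  also have "\<dots> \<le> normUinv * (normU * l2norm y)"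
    using U_norm[OF l2y] l2norm_trunc_le[of "mv U y" "n J"] normUinv_nonneg
    by (intro mult_left_mono) (auto intro: order_trans)
  finally have corr: "l2norm (schur_corr J y) \<le> normUinv * (normU * l2norm y)" .
  have "l2norm (schur_err k J y) \<le> normM * l2norm ((richardson (n J) ^^ k) (schur_corr J y))"
    unfolding schur_err_def using M_norm[OF l2_supp_lt[OF Rf]] by blast
  also have "\<dots> \<le> normM * (q ^ k * l2norm (schur_corr J y))"
    by (rule mult_left_mono[OF richardson_pow_contr[OF supp_lt_schur_corr] normM_nonneg])
  also have "\<dots> \<le> normM * (q ^ k * (normUinv * (normU * l2norm y)))"
    using corr q_props(1) normM_nonneg by (intro mult_left_mono) auto
  also have "\<dots> = err_D k * l2norm y" by (simp add: err_D_def)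
  finally show ?thesis unfolding schur_err_def using M_norm[OF l2_supp_lt[OF Rf]] by blast
qed

lemma L2_set_blk_le_l2norm_l2: "l2 v \<Longrightarrow> L2_set v (blk n J) \<le> l2norm v"
  using L2_set_mono_set[OF _ blk_subset] L2_set_le_l2norm
    by (meson blk_finite finite_lessThan order_trans)

lemma approx_D_blk_err:
  assumes y: "\<And>l. y l \<noteq> 0 \<Longrightarrow> blk_of l = J"
  shows "L2_set (\<lambda>i. mv DU y i - mv (approx_D k) y i) (blk n J) \<le> err_D k * l2norm y"
proof -
  have "L2_set (\<lambda>i. mv DU y i - mv (approx_D k) y i) (blk n J) = L2_set (schur_err k J y) (blk n J)"
    by (rule L2_set_cong) (simp_all add: mv_approx_D_blk[OF y] mv_DU_blk[OF y] blk_proj_def mem_blk_iff)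
  also have "\<dots> \<le> err_D k * l2norm y"
    using schur_err_bound[OF y] L2_set_blk_le_l2norm_l2 by (meson order_trans)
  finally show ?thesis .
qed

lemma DU_blk_bound:
  assumes y: "\<And>l. y l \<noteq> 0 \<Longrightarrow> blk_of l = J"
  shows "L2_set (mv DU y) (blk n J) \<le> normU * l2norm y"
proof -
  have l2y: "l2 y" by (rule l2_supp_lt[OF supp_lt_of_blk[OF y]])
  have "L2_set (mv DU y) (blk n J) = L2_set (mv U y) (blk n J)"
    by (rule L2_set_cong) (simp_all add: mv_DU_blk[OF y] blk_proj_def mem_blk_iff)
  also have "\<dots> \<le> normU * l2norm y"
    using U_norm[OF l2y] L2_set_blk_le_l2norm_l2 by (meson order_trans)
  finally show ?thesis .
qed

lemma l2norm_blk_supp: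
  assumes y: "\<And>l. y l \<noteq> 0 \<Longrightarrow> blk_of l = J"
  shows "l2norm y = L2_set y (blk n J)"
proof -
  have "l2norm y = L2_set y {..<n (Suc J)}" by (rule l2norm_supp_lt[OF supp_lt_of_blk[OF y]])
  also have "\<dots> = L2_set y (blk n J)"
    by (rule L2_set_zero_outside[OF _ blk_subset]) (use y mem_blk_iff in auto)
  finally show ?thesis .
qed

lemma diag_blk_U_coercive:
  assumes y: "\<And>l. y l \<noteq> 0 \<Longrightarrow> blk_of l = J"
  shows "cE * (\<Sum>i\<in>blk n J. (y i)\<^sup>2) \<le> (\<Sum>i\<in>blk n J. mv U y i * y i)"
proof -
  let ?x = "schur_ext J y"
  have xf: "supp_lt (n (Suc J)) ?x" by (rule supp_lt_schur_ext[OF y])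
  have split: "{..<n (Suc J)} = {..<n J} \<union> blk n J" "{..<n J} \<inter> blk n J = {}"
    using n_le_Suc[of J] by (auto simp: blk_def)
  have Mx0: "mv M ?x i * ?x i = 0" if "i < n J" for i
    using that mv_M_schur_ext[OF y, where i=i] n_le_Suc[of J] less_n_iff[of i J]
      by (simp add: blk_proj_def)
  have "(\<Sum>i\<in>blk n J. (y i)\<^sup>2) = (\<Sum>i\<in>blk n J. (?x i)\<^sup>2)"
    by (rule sum.cong) (simp_all add: schur_ext_blk mem_blk_iff)
  also have "\<dots> \<le> (\<Sum>i<n (Suc J). (?x i)\<^sup>2)"
    by (rule sum_mono2) (simp_all add: blk_subset)
  also have "\<dots> = (l2norm ?x)\<^sup>2" by (rule l2norm_power2_supp_lt[OF xf, symmetric])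
  finally have "cE * (\<Sum>i\<in>blk n J. (y i)\<^sup>2) \<le> cE * (l2norm ?x)\<^sup>2"
    using cE(1) by simp
  also have "\<dots> \<le> l2inner (mv M ?x) ?x" by (rule cE(2)[OF l2_supp_lt[OF xf]])
  also have "\<dots> = (\<Sum>i\<in>blk n J. mv M ?x i * ?x i)"
    unfolding l2inner_supp_lt[OF xf] split(1) by (simp add: sum.union_disjoint split(2) Mx0)
  also have "\<dots> = (\<Sum>i\<in>blk n J. mv U y i * y i)"
    using mv_M_schur_ext[OF y]
    by (intro sum.cong) (simp_all add: schur_ext_blk mem_blk_iff less_n_iff blk_proj_def)
  finally show ?thesis .
qed

lemma approx_D_blk_coercive:
  assumes y: "\<And>l. y l \<noteq> 0 \<Longrightarrow> blk_of l = J"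
  shows "(cE - err_D k) * (\<Sum>i\<in>blk n J. (y i)\<^sup>2) \<le> (\<Sum>i\<in>blk n J. mv (approx_D k) y i * y i)"
proof -
  define s where "s = (\<Sum>i\<in>blk n J. (y i)\<^sup>2)"
  have serr: "l2 (schur_err k J y)" "l2norm (schur_err k J y) \<le> err_D k * l2norm y"
    using schur_err_bound[OF y] by blast+
  have serr_blk: "L2_set (schur_err k J y) (blk n J) \<le> err_D k * l2norm y"
    using L2_set_blk_le_l2norm_l2[OF serr(1), of J] serr(2) by linarith
  have "\<bar>\<Sum>i\<in>blk n J. schur_err k J y i * y i\<bar> \<le> L2_set (schur_err k J y) (blk n J) * L2_set y (blk n J)"
    by (rule order_trans[OF sum_abs]) (simp add: abs_mult L2_set_mult_ineq)
  also have "\<dots> \<le> (err_D k * l2norm y) * L2_set y (blk n J)"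
    by (rule mult_right_mono[OF serr_blk L2_set_nonneg])
  also have "\<dots> = err_D k * s"
  proof -
    have "l2norm y = L2_set y (blk n J)" by (rule l2norm_blk_supp[OF y])
    then have "err_D k * l2norm y * L2_set y (blk n J) = err_D k * (L2_set y (blk n J))\<^sup>2"
      by (simp add: power2_eq_square)
    then show ?thesis by (simp add: s_def L2_set_power2)
  qed
  finally have err: "\<bar>\<Sum>i\<in>blk n J. schur_err k J y i * y i\<bar> \<le> err_D k * s" .
  have "(\<Sum>i\<in>blk n J. mv (approx_D k) y i * y i)
      = (\<Sum>i\<in>blk n J. mv U y i * y i) - (\<Sum>i\<in>blk n J. schur_err k J y i * y i)"
    by (simp add: mv_approx_D_blk[OF y] mem_blk_iff left_diff_distrib sum_subtractf)
  moreover have "cE * s \<le> (\<Sum>i\<in>blk n J. mv U y i * y i)"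
    unfolding s_def by (rule diag_blk_U_coercive[OF y])
  ultimately show ?thesis using err by (simp add: s_def left_diff_distrib)
qed

lemma blk_diag_row_supp:
  assumes Tblk: "\<And>i l. T i l \<noteq> 0 \<Longrightarrow> blk_of i = blk_of l"
  shows "mv T x i = (\<Sum>l<n (Suc (blk_of i)). T i l * x l)"
    and "summable (\<lambda>l. T i l * x l)"
proof -
  have z: "T i l * x l = 0" if "n (Suc (blk_of i)) \<le> l" for l
  proof -
    have "blk_of i \<noteq> blk_of l" using that less_n_iff[of l "Suc (blk_of i)"] by simp
    then show ?thesis using Tblk[of i l] by auto
  qed
  show "mv T x i = (\<Sum>l<n (Suc (blk_of i)). T i l * x l)"
    unfolding mv_def by (rule suminf_supp_lt(1)) (rule z)
  show "summable (\<lambda>l. T i l * x l)" by (rule suminf_supp_lt(2)) (rule z)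
qed

lemma blk_diag_mv_blk_proj:
  assumes Tblk: "\<And>i l. T i l \<noteq> 0 \<Longrightarrow> blk_of i = blk_of l" and i: "blk_of i = J"
  shows "mv T x i = mv T (blk_proj J x) i"
proof -
  have "mv T x i = (\<Sum>l<n (Suc (blk_of i)). T i l * x l)"
    by (rule blk_diag_row_supp(1)[OF Tblk])
  also have "\<dots> = (\<Sum>l<n (Suc (blk_of i)). T i l * blk_proj J x l)"
  proof (rule sum.cong[OF refl])
    fix l show "T i l * x l = T i l * blk_proj J x l"
      using Tblk[of i l] i by (cases "T i l = 0") (auto simp: blk_proj_def)
  qed
  also have "\<dots> = mv T (blk_proj J x) i" by (rule blk_diag_row_supp(1)[OF Tblk, symmetric])
  finally show ?thesis .
qed

lemma blk_diag_supp_lt: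
  assumes Tblk: "\<And>i l. T i l \<noteq> 0 \<Longrightarrow> blk_of i = blk_of l" and y: "supp_lt (n N) y"
  shows "supp_lt (n N) (mv T y)"
  unfolding supp_lt_def
proof (intro allI impI)
  fix i assume i: "n N \<le> i"
  have "T i l = 0" if "l < n N" for l
  proof (rule ccontr)
    assume "T i l \<noteq> 0"
    then have "blk_of l = blk_of i" using Tblk by simp
    then show False using that i less_n_iff[of i N] less_n_iff[of l N] by simp
  qed
  then show "mv T y i = 0" by (simp add: mv_supp_lt[OF y])
qed

lemma blk_diag_l2_bound:
  assumes Tblk: "\<And>i l. T i l \<noteq> 0 \<Longrightarrow> blk_of i = blk_of l" and C0: "0 \<le> C"
    and Tb: "\<And>J y. (\<And>l. y l \<noteq> 0 \<Longrightarrow> blk_of l = J) \<Longrightarrow> L2_set (mv T y) (blk n J) \<le> C * l2norm y"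
    and x: "l2 x"
  shows "l2 (mv T x) \<and> l2norm (mv T x) \<le> C * l2norm x"
proof (rule l2_bound_from_trunc[OF x blk_diag_row_supp(2)[OF Tblk]])
  fix N
  define y where "y = trunc N x"
  have yf: "supp_lt (n N) y" using supp_lt_trunc[of N x] le_n[of N] unfolding y_def
    by (rule supp_lt_mono)
  have Tyf: "supp_lt (n N) (mv T y)" by (rule blk_diag_supp_lt[OF Tblk yf])
  have "(l2norm (mv T y))\<^sup>2 = (\<Sum>I<N. (L2_set (mv T y) (blk n I))\<^sup>2)"
    by (rule l2norm_power2_blocks[OF Tyf])
  also have "\<dots> \<le> (\<Sum>I<N. (C * L2_set y (blk n I))\<^sup>2)"
  proof (rule sum_mono)
    fix I
    have "L2_set (mv T y) (blk n I) = L2_set (mv T (blk_proj I y)) (blk n I)"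
      by (rule L2_set_cong) (simp_all add: blk_diag_mv_blk_proj[OF Tblk, where x=y] mem_blk_iff)
    also have "\<dots> \<le> C * l2norm (blk_proj I y)" by (rule Tb) (rule blk_proj_nonzero)
    finally show "(L2_set (mv T y) (blk n I))\<^sup>2 \<le> (C * L2_set y (blk n I))\<^sup>2"
      by (intro power_mono) (simp_all add: l2norm_blk_proj)
  qed
  also have "\<dots> = (C * l2norm y)\<^sup>2"
    using l2norm_power2_blocks[OF yf] by (simp add: power_mult_distrib sum_distrib_left)
  finally have "l2norm (mv T y) \<le> C * l2norm y"
    by (rule power2_le_imp_le) (use C0 l2norm_nonneg[OF l2_supp_lt[OF yf]] in simp)
  also have "\<dots> \<le> C * l2norm x" unfolding y_def
    by (rule mult_left_mono[OF l2norm_trunc_le[OF x] C0])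
  finally show "l2 (mv T (trunc N x)) \<and> l2norm (mv T (trunc N x)) \<le> C * l2norm x"
    using l2_supp_lt[OF Tyf] by (simp add: y_def)
qed

lemma approx_D_nonzero_blk: "approx_D k i l \<noteq> 0 \<Longrightarrow> blk_of i = blk_of l"
  by (simp add: approx_D_def split: if_splits)

lemma err_D_op_nonzero_blk: "mdiff DU (approx_D k) i l \<noteq> 0 \<Longrightarrow> blk_of i = blk_of l"
  by (auto simp: mdiff_def DU_entry approx_D_def split: if_splits)

lemma approx_D_bound:
  assumes x: "l2 x"
  shows "l2 (mv (approx_D k) x) \<and> l2norm (mv (approx_D k) x) \<le> (normU + err_D k) * l2norm x"
proof (rule blk_diag_l2_bound[OF approx_D_nonzero_blk _ _ x])
  show "0 \<le> normU + err_D k" using normU_pos err_D_nonneg[of k] by simp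
  fix J and y :: ivec assume y: "\<And>l. y l \<noteq> 0 \<Longrightarrow> blk_of l = J"
  have eq: "mv (approx_D k) y = (\<lambda>i. mv DU y i - (mv DU y i - mv (approx_D k) y i))" by simp
  have "L2_set (mv (approx_D k) y) (blk n J)
      \<le> L2_set (mv DU y) (blk n J) + L2_set (\<lambda>i. mv DU y i - mv (approx_D k) y i) (blk n J)"
    by (subst eq, rule L2_set_diff_le)
  also have "\<dots> \<le> normU * l2norm y + err_D k * l2norm y"
    using approx_D_blk_err[where y=y and J=J and k=k, OF y] DU_blk_bound[where y=y and J=J, OF y]
      by simp
  finally show "L2_set (mv (approx_D k) y) (blk n J) \<le> (normU + err_D k) * l2norm y"
    by (simp add: distrib_right)
qed

lemma mv_err_D_op_supp_lt:
  "supp_lt N y \<Longrightarrow> mv (mdiff DU (approx_D k)) y = (\<lambda>i. mv DU y i - mv (approx_D k) y i)"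
  by (rule mv_mdiff) (simp_all add: summable_row_supp_lt)

lemma err_D_op_bound:
  assumes x: "l2 x"
  shows "l2 (mv (mdiff DU (approx_D k)) x) \<and> l2norm (mv (mdiff DU (approx_D k)) x) \<le> err_D k * l2norm x"
proof (rule blk_diag_l2_bound[OF err_D_op_nonzero_blk err_D_nonneg _ x])
  fix J and y :: ivec assume y: "\<And>l. y l \<noteq> 0 \<Longrightarrow> blk_of l = J"
  show "L2_set (mv (mdiff DU (approx_D k)) y) (blk n J) \<le> err_D k * l2norm y"
    using approx_D_blk_err[where y=y and J=J and k=k, OF y]
      mv_err_D_op_supp_lt[OF supp_lt_of_blk[OF y], where k=k] by simp
qed

lemma approx_D_summable: "summable (\<lambda>l. approx_D k i l * x l)"
  by (rule blk_diag_row_supp(2)) (rule approx_D_nonzero_blk)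

lemma approx_D_bounded: "bounded_l2 (approx_D k)"
  by (rule bounded_l2I[OF approx_D_bound approx_D_summable])

lemma err_D_op_opnorm: "opnorm2 (mdiff DU (approx_D k)) \<le> err_D k"
  by (rule opnorm2_le) (use err_D_nonneg err_D_op_bound in auto)

lemma sums_blocks:
  fixes f :: "nat \<Rightarrow> real"
  shows "summable f \<Longrightarrow> (\<lambda>J. \<Sum>i\<in>blk n J. f i) sums suminf f"
proof -
  assume f: "summable f"
  have "(\<lambda>Q. \<Sum>i<n Q. f i) \<longlonglongrightarrow> suminf f"
    using LIMSEQ_subseq_LIMSEQ[OF summable_LIMSEQ[OF f] n_strict_mono] by (simp add: comp_def)
  thus ?thesis unfolding sums_def by (simp add: sum_lessThan_n_blocks)
qed

lemma approx_D_elliptic: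
  assumes small: "err_D k < cE"
  shows "elliptic (approx_D k)"
  unfolding elliptic_def
proof (intro exI[of _ "cE - err_D k"] conjI allI impI)
  show "0 < cE - err_D k" using small by simp
  fix x assume x: "l2 x"
  define f where "f i = mv (approx_D k) x i * x i" for i
  have l2D: "l2 (mv (approx_D k) x)" using approx_D_bound[OF x] by blast
  have f: "summable f" unfolding f_def by (rule summable_l2_mult[OF l2D x])
  have s1: "(\<lambda>J. \<Sum>i\<in>blk n J. f i) sums l2inner (mv (approx_D k) x) x"
    unfolding l2inner_def f_def[symmetric] using sums_blocks[OF f] by simp
  have sx: "summable (\<lambda>i. (x i)\<^sup>2)" using x by (simp add: l2_def)
  have s2: "(\<lambda>J. (cE - err_D k) * (\<Sum>i\<in>blk n J. (x i)\<^sup>2)) sums ((cE - err_D k) * (\<Sum>i. (x i)\<^sup>2))"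
    by (rule sums_mult[OF sums_blocks[OF sx]])
  have le: "(cE - err_D k) * (\<Sum>i\<in>blk n J. (x i)\<^sup>2) \<le> (\<Sum>i\<in>blk n J. f i)" for J
  proof -
    have "(\<Sum>i\<in>blk n J. f i) = (\<Sum>i\<in>blk n J. mv (approx_D k) (blk_proj J x) i * blk_proj J x i)"
    proof (rule sum.cong[OF refl])
      fix i assume "i \<in> blk n J"
      hence i: "blk_of i = J" by (simp add: mem_blk_iff)
      have "mv (approx_D k) x i = mv (approx_D k) (blk_proj J x) i"
        by (rule blk_diag_mv_blk_proj[OF approx_D_nonzero_blk i])
      then show "f i = mv (approx_D k) (blk_proj J x) i * blk_proj J x i" using i
        by (simp add: f_def blk_proj_def)
    qed
    also have "\<dots> \<ge> (cE - err_D k) * (\<Sum>i\<in>blk n J. (blk_proj J x i)\<^sup>2)"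
      by (rule approx_D_blk_coercive) (rule blk_proj_nonzero)
    also have "(\<Sum>i\<in>blk n J. (blk_proj J x i)\<^sup>2) = (\<Sum>i\<in>blk n J. (x i)\<^sup>2)"
      by (rule sum.cong) (simp_all add: blk_proj_def mem_blk_iff)
    finally show ?thesis by simp
  qed
  have "(cE - err_D k) * (\<Sum>i. (x i)\<^sup>2) \<le> l2inner (mv (approx_D k) x) x"
    by (rule sums_le[OF le s2 s1])
  thus "(cE - err_D k) * (l2norm x)\<^sup>2 \<le> l2inner (mv (approx_D k) x) x"
    using l2norm_power2[OF x] by simp
qed

lemma approx_D_nonzero_near: "approx_D k i l \<noteq> 0 \<Longrightarrow> d i l \<le> real ((k + 1) * b0)"
proof -
  assume nz: "approx_D k i l \<noteq> 0"
  let ?J = "blk_of l"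
  have hf: "supp_lt (n (Suc ?J)) (schur_vec k ?J (unit_vec l))"
    by (rule supp_lt_schur_vec[OF unit_vec_supp_lt])
  have "mv M (schur_vec k ?J (unit_vec l)) i \<noteq> 0" using nz
    by (simp add: approx_D_def split: if_splits)
  then obtain j where Mij: "M i j \<noteq> 0" and hj: "schur_vec k ?J (unit_vec l) j \<noteq> 0"
    by (rule mv_M_nonzero[OF hf])
  have dij: "d i j \<le> real b0" using M_nonzero_near[OF Mij] by simp
  have "d j l \<le> real (k * b0)"
  proof (cases "j = l")
    case True thus ?thesis using d_refl[of l] by simp
  next
    case False
    hence Znz: "neumann (n ?J) k (trunc (n ?J) (mv M (unit_vec l))) j \<noteq> 0" using hj
      by (simp add: schur_vec_def unit_vec_def)
    have kpos: "0 < k"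
    proof (rule ccontr)
      assume "\<not> 0 < k"
      hence "k = 0" by simp
      thus False using Znz by (simp add: neumann_def)
    qed
    from Znz obtain j' where j': "trunc (n ?J) (mv M (unit_vec l)) j' \<noteq> 0" "d j j' \<le> real ((k - 1) * b0)"
      using neumann_nonzero by blast
    have "M j' l \<noteq> 0" using j'(1) by (simp add: trunc_def mv_unit_vec split: if_splits)
    hence "d j' l \<le> real b0" using M_nonzero_near by simp
    hence "d j l \<le> real ((k - 1) * b0) + real b0" using d_triangle[of j l j'] j'(2) by simp
    also have "\<dots> \<le> real (k * b0)"
      using kpos by (cases k) (simp_all add: algebra_simps)
    finally show ?thesis .
  qed
  hence "d i l \<le> real b0 + real (k * b0)" using d_triangle[of i l j] dij by simp
  also have "\<dots> = real ((k + 1) * b0)" by (simp add: algebra_simps)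
  finally show ?thesis .
qed

lemma approx_Uinv_blk_upper: "blk_upper n (approx_Uinv k)"
  unfolding blk_upper_def blk_zero_def by (metis approx_Uinv_nonzero_near mem_blk_iff not_le)

lemma approx_Uinv_blk_banded: "blk_banded n ((k + 1) * b0) (approx_Uinv k)"
  unfolding blk_banded_def blk_zero_def
proof (intro allI impI ballI)
  fix I J i l assume IJ: "int ((k + 1) * b0) < \<bar>int I - int J\<bar>" and "i \<in> blk n I" "l \<in> blk n J"
  then have i: "blk_of i = I" and l: "blk_of l = J" by (simp_all add: mem_blk_iff)
  have "(k - 1) * b0 \<le> (k + 1) * b0" by (intro mult_right_mono) auto
  then show "approx_Uinv k i l = 0" using IJ approx_Uinv_nonzero_near[of k i l] unfolding i l
    by linarith
qed

lemma approx_Uinv_in_B: "in_B d ((k + 1) * b0) (approx_Uinv k)"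
proof -
  have "real ((k - 1) * b0) \<le> real ((k + 1) * b0)" by (intro of_nat_mono mult_right_mono) auto
  thus ?thesis unfolding in_B_def using approx_Uinv_nonzero_near by force
qed

lemma approx_D_blk_diagonal: "blk_diagonal n (approx_D k)"
  unfolding blk_diagonal_def blk_zero_def by (metis approx_D_nonzero_blk mem_blk_iff)

lemma approx_D_in_B: "in_B d ((k + 1) * b0) (approx_D k)"
  unfolding in_B_def using approx_D_nonzero_near by force

lemma err_Uinv_tendsto_0: "err_Uinv \<longlonglongrightarrow> 0"
proof -
  have "(\<lambda>k. normUinv * r ^ k * (real b0 / (1 - r))) \<longlonglongrightarrow> normUinv * 0 * (real b0 / (1 - r))"
    by (intro tendsto_intros LIMSEQ_power_zero) (use r_props in auto)
  thus ?thesis by (simp add: err_Uinv_def[abs_def])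
qed

lemma err_D_tendsto_0: "err_D \<longlonglongrightarrow> 0"
proof -
  have "(\<lambda>k. normM * q ^ k * normUinv * normU) \<longlonglongrightarrow> normM * 0 * normUinv * normU"
    by (intro tendsto_intros LIMSEQ_power_zero) (use q_props in auto)
  thus ?thesis by (simp add: err_D_def[abs_def])
qed

lemma banded_approximations:
  "\<exists>K. \<forall>\<epsilon>>0. \<exists>(b::nat) Ueinv Ue De.
     blk_upper n Ueinv \<and> in_B d b Ueinv \<and> blk_banded n b Ueinv \<and>
     opnorm2 (mdiff Uinv Ueinv) \<le> \<epsilon> \<and>
     is_bounded_inverse Ueinv Ue \<and>
     opnorm2 Ue + opnorm2 Ueinv \<le> K \<and>
     blk_diagonal n De \<and> in_B d b De \<and> bounded_l2 De \<and> elliptic De \<and>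
     opnorm2 (mdiff DU De) \<le> \<epsilon>"
proof (rule exI[of _ "normUinv + 1 + 2 * normU"], intro allI impI)
  fix \<epsilon> :: real assume "0 < \<epsilon>"
  have "\<forall>\<^sub>F k in sequentially. err_Uinv k < min \<epsilon> 1 \<and> err_Uinv k < 1 / (2 * normU) \<and>
      err_D k < min \<epsilon> cE"
    using \<open>0 < \<epsilon>\<close> normU_pos cE(1)
    by (intro eventually_conj order_tendstoD(2)[OF err_Uinv_tendsto_0]
        order_tendstoD(2)[OF err_D_tendsto_0]) auto
  then obtain k where k: "err_Uinv k \<le> \<epsilon>" "err_Uinv k \<le> 1" "err_Uinv k \<le> 1 / (2 * normU)"
    "err_D k \<le> \<epsilon>" "err_D k < cE"
    unfolding eventually_sequentially by force
  have small: "normU * err_Uinv k \<le> 1/2"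
    using k(3) normU_pos by (simp add: field_simps)
  have "opnorm2 (approx_U k) + opnorm2 (approx_Uinv k) \<le> normUinv + 1 + 2 * normU"
    using approx_U_opnorm[OF small] approx_Uinv_opnorm[of k] k(2) by simp
  then show "\<exists>(b::nat) Ueinv Ue De.
     blk_upper n Ueinv \<and> in_B d b Ueinv \<and> blk_banded n b Ueinv \<and>
     opnorm2 (mdiff Uinv Ueinv) \<le> \<epsilon> \<and>
     is_bounded_inverse Ueinv Ue \<and>
     opnorm2 Ue + opnorm2 Ueinv \<le> normUinv + 1 + 2 * normU \<and>
     blk_diagonal n De \<and> in_B d b De \<and> bounded_l2 De \<and> elliptic De \<and>
     opnorm2 (mdiff DU De) \<le> \<epsilon>"
    using approx_Uinv_blk_upper approx_Uinv_in_B approx_Uinv_blk_banded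
      err_Uinv_opnorm[of k] approx_Uinv_inverse[OF small]
      approx_D_blk_diagonal approx_D_in_B approx_D_bounded approx_D_elliptic[OF k(5)]
      err_D_op_opnorm[of k] k(1,4)
    by (intro exI[of _ "(k + 1) * b0"] exI[of _ "approx_Uinv k"] exI[of _ "approx_U k"]
        exI[of _ "approx_D k"]) auto
qed

end

theorem lemma3p8:
  fixes M L U Uinv :: imat and n :: "nat \<Rightarrow> nat" and d :: "nat \<Rightarrow> nat \<Rightarrow> real" and b0 :: nat
  assumes "bounded_l2 M" and "elliptic M"
    and "block_structure n"
    and "blk_banded n b0 M"
    and "nat_metric d" and "in_B d b0 M"
    and "\<forall>i j. M i j = mmul L U i j"
    and "blk_lower n L" and "blk_unit_diag n L" and "blk_upper n U"
    and "is_bounded_inverse U Uinv"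
  shows "\<exists>K. \<forall>\<epsilon>>0. \<exists>(b::nat) Ueinv Ue De.
            blk_upper n Ueinv \<and> in_B d b Ueinv \<and> blk_banded n b Ueinv \<and>
            opnorm2 (mdiff Uinv Ueinv) \<le> \<epsilon> \<and>
            is_bounded_inverse Ueinv Ue \<and>
            opnorm2 Ue + opnorm2 Ueinv \<le> K \<and>
            blk_diagonal n De \<and> in_B d b De \<and> bounded_l2 De \<and> elliptic De \<and>
            opnorm2 (mdiff (blk_diag_part n U) De) \<le> \<epsilon>"
proof -
  \<comment> \<open>The locale needs a positive bandwidth; a band of width b0 is also one of width b0 + 1.\<close>
  have "blk_banded n (Suc b0) M"
    using assms(4) unfolding blk_banded_def by force
  moreover have "in_B d (Suc b0) M"
    using assms(6) unfolding in_B_def by (meson le_less_trans of_nat_le_iff le_SucI order_refl)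
  ultimately interpret block_LU M L U Uinv n d "Suc b0"
    using assms by (intro block_LU.intro) auto
  show ?thesis by (rule banded_approximations)
qed

end
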